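(* For every fixed positive integer $k$, the problems $\mathbf{SSP}(\mathcal{M}_{\max,\times}^k)$ and $\mathbf{KP}(\mathcal{M}_{\max,\times}^k)$ are decidable generically in polynomial time with respect to the stratification $\{U_m\}_m$: for each of them there is an algorithm that halts on every input $I\in U$ in time polynomial in $\mathrm{size}_2(I)$, outputs either the correct answer (true/false) or "?", and the set of inputs on which it does not output "?" has asymptotic density $1$.
   Context: $\mathcal{M}_{\max,\times}^k$ is the semigroup $\mathrm{Mat}_k(\mathbb{Z}_{\geq 1})$ with $(A\otimes B)_{ij}=\max_{l}(a_{il}\cdot b_{lj})$. In $W_1^{\otimes x_1}\otimes\cdots\otimes W_n^{\otimes x_n}$ a factor with $x_i=0$ is omitted and the all-zero exponent vector is not allowed. $\mathbf{SSP}(\mathcal{S})$: given $W_1,\dots,W_n,C\in\mathcal{S}$, decide whether some $x\in\{0,1\}^n$, not all zero, satisfies $W_1^{\otimes x_1}\otimes\cdots\otimes W_n^{\otimes x_n}=C$; $\mathbf{KP}(\mathcal{S})$: the same with $x\in\mathbb{Z}_{\ge0}^n$. Sizes: $\mathrm{size}_2(a)=\lfloor\log_2 a\rfloor+1$ for $a\ge1$; $\mathrm{size}_2(A)=\sum_{i,j}\mathrm{size}_2(a_{ij})+k^2-1$; $\mathrm{size}_2(W_1,\dots,W_n,C)=\sum_i\mathrm{size}_2(W_i)+\mathrm{size}_2(C)+n$. $U$ is the set of all tuples $(W_1,\dots,W_n,C)$ with $n\ge0$ and entries in $\mathrm{Mat}_k(\mathbb{Z}_{\geq 1})$; $U_m=\{I\in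 U:\mathrm{size}_2(I)=m\}$. The asymptotic density of $A\subseteq U$ is $\rho(A)=\lim_{m\to\infty}|A\cap U_m|/|U_m|$ (over $m$ with $U_m\ne\emptyset$). *)

theory Defs
  imports Complex_Main
begin

type_synonym mat = "nat list list"
type_synonym inst = "mat list \<times> mat"

definition valid_mat :: "nat \<Rightarrow> mat \<Rightarrow> bool" where
  "valid_mat k A \<longleftrightarrow> length A = k \<and> (\<forall>r\<in>set A. length r = k \<and> (\<forall>a\<in>set r. a \<ge> 1))"

definition mat_mult :: "nat \<Rightarrow> mat \<Rightarrow> mat \<Rightarrow> mat" where
  "mat_mult k A B =
     map (\<lambda>i. map (\<lambda>j. Max ((\<lambda>l. A ! i ! l * B ! l ! j) ` {..<k})) [0..<k]) [0..<k]"

definition mat_prod :: "nat \<Rightarrow> mat list \<Rightarrow> mat" where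
  "mat_prod k As = fold (\<lambda>B acc. mat_mult k acc B) (tl As) (hd As)"

definition factors :: "nat list \<Rightarrow> mat list \<Rightarrow> mat list" where
  "factors xs Ws = concat (map2 (\<lambda>x W. replicate x W) xs Ws)"

definition SSP :: "nat \<Rightarrow> inst \<Rightarrow> bool" where
  "SSP k I = (case I of (Ws, C) \<Rightarrow>
     \<exists>xs. length xs = length Ws \<and> set xs \<subseteq> {0, 1} \<and> (\<exists>x\<in>set xs. x \<noteq> 0)
          \<and> mat_prod k (factors xs Ws) = C)"

definition KP :: "nat \<Rightarrow> inst \<Rightarrow> bool" where
  "KP k I = (case I of (Ws, C) \<Rightarrow>
     \<exists>xs. length xs = length Ws \<and> (\<exists>x\<in>set xs. x \<noteq> 0)
          \<and> mat_prod k (factors xs Ws) = C)"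

definition size2 :: "nat \<Rightarrow> nat" where
  "size2 a = nat \<lfloor>log 2 (real a)\<rfloor> + 1"

definition size2_mat :: "nat \<Rightarrow> mat \<Rightarrow> nat" where
  "size2_mat k A = (\<Sum>i<k. \<Sum>j<k. size2 (A ! i ! j)) + k^2 - 1"

definition size2_inst :: "nat \<Rightarrow> inst \<Rightarrow> nat" where
  "size2_inst k I = (case I of (Ws, C) \<Rightarrow>
     (\<Sum>W\<leftarrow>Ws. size2_mat k W) + size2_mat k C + length Ws)"

definition Uall :: "nat \<Rightarrow> inst set" where
  "Uall k = {(Ws, C). (\<forall>W\<in>set Ws. valid_mat k W) \<and> valid_mat k C}"

definition Um :: "nat \<Rightarrow> nat \<Rightarrow> inst set" where
  "Um k m = {I \<in> Uall k. size2_inst k I = m}"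

definition density_one :: "nat \<Rightarrow> inst set \<Rightarrow> bool" where
  "density_one k A \<longleftrightarrow>
     ((\<lambda>m. real (card (A \<inter> Um k m)) / real (card (Um k m))) \<longlongrightarrow> 1)
       (inf sequentially (principal {m. Um k m \<noteq> {}}))"

fun bits :: "nat \<Rightarrow> nat list" where
  "bits a = (if a < 2 then [a] else bits (a div 2) @ [a mod 2])"

fun join :: "'a list \<Rightarrow> 'a list list \<Rightarrow> 'a list" where
  "join s [] = []"
| "join s [x] = x"
| "join s (x # y # r) = x @ s @ join s (y # r)"

text \<open>Tape symbols: 0 = blank, 1 = bit 0, 2 = bit 1, 3 = entry separator, 4 = matrix separator.
  The length of the encoding equals size2_inst.\<close>
definition encode_mat :: "mat \<Rightarrow> nat list" where
  "encode_mat A = join [3] (map (\<lambda>a. map Suc (bits a)) (concat A))"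

definition encode_inst :: "inst \<Rightarrow> nat list" where
  "encode_inst I = (case I of (Ws, C) \<Rightarrow> join [4] (map encode_mat (Ws @ [C])))"

datatype dir = Lft | Rgt | Stay

text \<open>delta q s = (new state, written symbol, move). Start state 0; halting states
  1 (answer true), 2 (answer false), 3 (answer "?").\<close>
type_synonym tm = "nat \<Rightarrow> nat \<Rightarrow> nat \<times> nat \<times> dir"

definition tm_wf :: "nat \<Rightarrow> nat \<Rightarrow> tm \<Rightarrow> bool" where
  "tm_wf Q S M \<longleftrightarrow> 4 \<le> Q \<and> 5 \<le> S \<and>
     (\<forall>q<Q. \<forall>s<S. case M q s of (q', w, d) \<Rightarrow> q' < Q \<and> w < S)"

type_synonym config = "nat \<times> nat list \<times> nat list"  (* state, reversed left part, head and right part *)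

definition tm_step :: "tm \<Rightarrow> config \<Rightarrow> config" where
  "tm_step M c = (case c of (q, ls, rs) \<Rightarrow>
     if q \<in> {1, 2, 3} then c else
     (let s = (case rs of [] \<Rightarrow> 0 | x # _ \<Rightarrow> x) in
      case M q s of (q', w, d) \<Rightarrow>
        (case d of
           Stay \<Rightarrow> (q', ls, w # tl rs)
         | Rgt \<Rightarrow> (q', w # ls, tl rs)
         | Lft \<Rightarrow> (case ls of [] \<Rightarrow> (q', [], w # tl rs)
                             | l # ls' \<Rightarrow> (q', ls', l # w # tl rs)))))"

definition tm_state_after :: "tm \<Rightarrow> nat \<Rightarrow> nat list \<Rightarrow> nat" where
  "tm_state_after M t x = fst ((tm_step M ^^ t) (0, [], x))"

definition generically_poly :: "nat \<Rightarrow> (inst \<Rightarrow> bool) \<Rightarrow> bool" where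
  "generically_poly k P \<longleftrightarrow>
     (\<exists>M Q S c d. tm_wf Q S M \<and>
        (\<forall>I\<in>Uall k.
           let r = tm_state_after M (c * (size2_inst k I + 1) ^ d) (encode_inst I)
           in r \<in> {1, 2, 3} \<and> (r = 1 \<longrightarrow> P I) \<and> (r = 2 \<longrightarrow> \<not> P I)) \<and>
        density_one k {I \<in> Uall k.
           tm_state_after M (c * (size2_inst k I + 1) ^ d) (encode_inst I) \<noteq> 3})"

end

theory Submission
  imports Defs "HOL-Library.Log_Nat" "HOL-Analysis.Uniform_Limit"
begin

text \<open>If C is one of the W_i, both problems have the answer yes (select that W_i alone). A
  Turing machine checks this in quadratic time and answers "?" otherwise, so it suffices that C
  occurs among the W_i for almost all instances. Weight a matrix by its encoded size plus one:
  an instance of size m is then a list of matrices of total weight m + 1. At y = sqrt 2 - 1 the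
  weight generating function of a single matrix equals 1, so the number of instances of size m
  is, by renewal theory, of exact order y^-(m + 1); lists avoiding a fixed C form a defective
  renewal sequence and are exponentially rarer, and Tannery's theorem sums this over all C.\<close>

section \<open>Binary sizes and the encoding of instances\<close>

lemma size2_floorlog: "a > 0 \<Longrightarrow> size2 a = floorlog 2 a"
  by (simp add: size2_def floorlog_def)

lemma size2_bounds: "a > 0 \<Longrightarrow> 2 ^ (size2 a - 1) \<le> a \<and> a < 2 ^ size2 a"
  using floorlog_bounds[of a 2] by (simp add: size2_floorlog)

lemma size2_ge1: "size2 a \<ge> 1"
  by (simp add: size2_def)

lemma size2_eqI:
  "2 ^ (s - 1) \<le> a \<Longrightarrow> a < 2 ^ s \<Longrightarrow> s \<ge> 1 \<Longrightarrow> size2 a = s"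
proof -
  assume a: "2 ^ (s - 1) \<le> a" "a < 2 ^ s" "s \<ge> 1"
  have "a > 0" using a(1) by (metis less_le_trans zero_less_numeral zero_less_power)
  moreover have "floorlog 2 a \<le> s" using a by (intro floorlog_leI) auto
  moreover have "s \<le> floorlog 2 a" using a by (intro floorlog_geI) auto
  ultimately show ?thesis by (simp add: size2_floorlog)
qed

lemma size2_iff:
  "a \<ge> 1 \<and> size2 a = s \<longleftrightarrow> s \<ge> 1 \<and> 2 ^ (s - 1) \<le> a \<and> a < 2 ^ s"
proof
  assume "a \<ge> 1 \<and> size2 a = s" then show "s \<ge> 1 \<and> 2 ^ (s - 1) \<le> a \<and> a < 2 ^ s"
    using size2_bounds[of a] size2_ge1[of a] by auto
next
  assume h: "s \<ge> 1 \<and> 2 ^ (s - 1) \<le> a \<and> a < 2 ^ s"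
  then have "a \<ge> 1" by (metis le_trans one_le_numeral one_le_power)
  then show "a \<ge> 1 \<and> size2 a = s" using h size2_eqI by auto
qed

lemma card_size2_eq: "card {a::nat. a \<ge> 1 \<and> size2 a = s} = (if s \<ge> 1 then 2 ^ (s - 1) else 0)"
proof (cases "s \<ge> 1")
  case True
  have "{a::nat. a \<ge> 1 \<and> size2 a = s} = {2 ^ (s - 1) ..< 2 ^ s}"
  proof (rule set_eqI)
    fix a show "a \<in> {a::nat. a \<ge> 1 \<and> size2 a = s} \<longleftrightarrow> a \<in> {2 ^ (s - 1) ..< 2 ^ s}"
      using size2_iff[of a s] True by auto
  qed
  moreover have "(2::nat) ^ s - 2 ^ (s - 1) = 2 ^ (s - 1)"
    using True by (metis Suc_diff_le diff_Suc_1 mult_2 power_Suc diff_add_inverse2 le_add_diff_inverse2 add_diff_cancel_right')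
  ultimately show ?thesis using True by simp
next
  case False
  then have "s = 0" by simp
  then have E: "{a::nat. a \<ge> 1 \<and> size2 a = s} = {}" using size2_ge1 by (auto simp: Suc_le_eq)
  have "card {a::nat. a \<ge> 1 \<and> size2 a = s} = 0" by (subst E) simp
  then show ?thesis using False by simp
qed

lemma bits_lt2: "a < 2 \<Longrightarrow> bits a = [a]" by simp
lemma bits_ge2: "\<not> a < 2 \<Longrightarrow> bits a = bits (a div 2) @ [a mod 2]" by simp
declare bits.simps [simp del]

lemma length_bits: "a \<ge> 1 \<Longrightarrow> length (bits a) = size2 a"
proof (induction a rule: bits.induct)
  case (1 a)
  show ?case
  proof (cases "a < 2")
    case True
    then have "a = 1" using 1 by simp
    then show ?thesis by (simp add: size2_def bits_lt2)
  next
    case False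
    then have h: "length (bits (a div 2)) = size2 (a div 2)" using 1 by simp
    have "size2 a = size2 (a div 2) + 1"
      using False compute_floorlog[of 2 a] by (simp add: size2_floorlog)
    then show ?thesis using False h by (simp add: bits_ge2)
  qed
qed

lemma bits_ne: "bits a \<noteq> []"
  by (cases "a < 2") (auto simp: bits_lt2 bits_ge2)

lemma set_bits: "a \<ge> 1 \<Longrightarrow> set (bits a) \<subseteq> {0, 1}"
proof (induction a rule: bits.induct)
  case (1 a)
  show ?case
  proof (cases "a < 2")
    case True then show ?thesis using 1 by (simp add: bits_lt2)
  next
    case False then show ?thesis using 1 by (auto simp: bits_ge2)
  qed
qed

lemma foldl_bits: "foldl (\<lambda>n d. 2 * n + d) 0 (bits a) = a"
proof (induction a rule: bits.induct)
  case (1 a)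
  then show ?case by (cases "a < 2") (simp_all add: bits_lt2 bits_ge2)
qed

lemma bits_inj: "bits a = bits b \<Longrightarrow> a = b"
  by (metis foldl_bits)

lemma join_snoc: "xs \<noteq> [] \<Longrightarrow> join s (xs @ [z]) = join s xs @ s @ z"
proof (induction s xs rule: join.induct)
  case (1 s) then show ?case by simp
next
  case (2 s x) then show ?case by simp
next
  case (3 s x y' r) then show ?case by simp
qed

lemma set_join: "set (join s xs) \<subseteq> set s \<union> \<Union> (set ` set xs)"
  by (induction s xs rule: join.induct) auto

lemma length_join:
  "xs \<noteq> [] \<Longrightarrow> length (join s xs) = sum_list (map length xs) + length s * (length xs - 1)"
  by (induction s xs rule: join.induct) (auto simp: algebra_simps)

lemma join_ne: "xs \<noteq> [] \<Longrightarrow> hd xs \<noteq> [] \<Longrightarrow> join s xs \<noteq> []"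
  by (induction s xs rule: join.induct) auto

lemma append_Cons_sep_eq:
  "c \<notin> set x \<Longrightarrow> c \<notin> set y \<Longrightarrow> x @ c # R1 = y @ c # R2 \<Longrightarrow> x = y \<and> R1 = R2"
proof (induction x arbitrary: y)
  case Nil then show ?case by (cases y) auto
next
  case (Cons a x) then show ?case by (cases y) auto
qed

lemma list_cases012:
  "(ys = [] \<Longrightarrow> P) \<Longrightarrow> (\<And>y. ys = [y] \<Longrightarrow> P) \<Longrightarrow> (\<And>y y' r. ys = y # y' # r \<Longrightarrow> P) \<Longrightarrow> P"
  by (metis remdups_adj.cases)

lemma join_inj:
  "\<forall>x\<in>set xs \<union> set ys. x \<noteq> [] \<and> c \<notin> set x \<Longrightarrow> join [c] xs = join [c] ys \<Longrightarrow> xs = ys"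
proof (induction xs arbitrary: ys rule: induct_list012)
  case 1
  then show ?case by (cases ys rule: list_cases012) auto
next
  case (2 x)
  show ?case
  proof (cases ys rule: list_cases012)
    case 1 then show ?thesis using 2 by auto
  next
    case (2 y) then show ?thesis using "2.prems" by auto
  next
    case (3 y y' r)
    then have "x = y @ c # join [c] (y' # r)" using "2.prems" by simp
    then have "c \<in> set x" by simp
    then show ?thesis using "2.prems" by auto
  qed
next
  case (3 x x' r)
  show ?case
  proof (cases ys rule: list_cases012)
    case 1 then show ?thesis using "3.prems" by auto
  next
    case (2 y)
    then have "y = x @ c # join [c] (x' # r)" using "3.prems" by simp
    then have "c \<in> set y" by simp
    then show ?thesis using "3.prems" 2 by auto
  next
    case (3 y y' r')
    then have "x @ c # join [c] (x' # r) = y @ c # join [c] (y' # r')" using "3.prems" by simp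
    then have "x = y \<and> join [c] (x' # r) = join [c] (y' # r')"
      using "3.prems" 3 by (intro append_Cons_sep_eq) auto
    moreover have "x' # r = y' # r'"
      using calculation "3.IH"(2)[of "y' # r'"] "3.prems" 3 by auto
    ultimately show ?thesis using 3 by simp
  qed
qed

lemma concat_same_lengths_inj:
  "\<forall>r\<in>set A \<union> set B. length r = k \<Longrightarrow> length A = length B \<Longrightarrow> concat A = concat B \<Longrightarrow> A = B"
proof (induction A arbitrary: B)
  case Nil then show ?case by simp
next
  case (Cons a A)
  then obtain b B' where B: "B = b # B'" by (cases B) auto
  then have "a @ concat A = b @ concat B'" using Cons.prems by simp
  moreover have "length a = length b" using Cons.prems B by auto
  ultimately have "a = b" "concat A = concat B'" by auto
  then show ?case using Cons B by auto
qed

lemma length_concat_valid_mat: "valid_mat k A \<Longrightarrow> length (concat A) = k * k"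
proof -
  assume v: "valid_mat k A"
  have "length (concat A) = sum_list (map length A)" by (simp add: length_concat)
  also have "map length A = replicate k k" using v unfolding valid_mat_def
    by (simp add: map_replicate_const[symmetric] list_eq_iff_nth_eq)
  finally show ?thesis by (simp add: sum_list_replicate)
qed

lemma set_encode_mat: "valid_mat k A \<Longrightarrow> set (encode_mat A) \<subseteq> {1,2,3}"
proof -
  assume v: "valid_mat k A"
  have "\<forall>x\<in>set (map (\<lambda>a. map Suc (bits a)) (concat A)). set x \<subseteq> {1,2}"
  proof
    fix x assume "x \<in> set (map (\<lambda>a. map Suc (bits a)) (concat A))"
    then obtain a where a: "a \<in> set (concat A)" "x = map Suc (bits a)" by auto
    have "a \<ge> 1" using a(1) v by (auto simp: valid_mat_def)
    then show "set x \<subseteq> {1,2}" using set_bits[of a] a(2) by auto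
  qed
  then show ?thesis unfolding encode_mat_def using set_join[of "[3]" "map (\<lambda>a. map Suc (bits a)) (concat A)"] by fastforce
qed

lemma encode_mat_ne: "valid_mat k A \<Longrightarrow> k \<ge> 1 \<Longrightarrow> encode_mat A \<noteq> []"
proof -
  assume v: "valid_mat k A" "k \<ge> 1"
  then have "concat A \<noteq> []" using length_concat_valid_mat[OF v(1)]
    by (metis le_0_eq length_0_conv mult_is_0 not_one_le_zero)
  then show ?thesis unfolding encode_mat_def by (intro join_ne) (auto simp: bits_ne hd_map)
qed

lemma encode_mat_inj:
  "valid_mat k A \<Longrightarrow> valid_mat k B \<Longrightarrow> encode_mat A = encode_mat B \<Longrightarrow> A = B"
proof -
  assume vA: "valid_mat k A" and vB: "valid_mat k B" and e: "encode_mat A = encode_mat B"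
  let ?f = "\<lambda>a. map Suc (bits a)"
  have "\<forall>x\<in>set (map ?f (concat A)) \<union> set (map ?f (concat B)). x \<noteq> [] \<and> 3 \<notin> set x"
  proof
    fix x assume "x \<in> set (map ?f (concat A)) \<union> set (map ?f (concat B))"
    then obtain a where a: "a \<in> set (concat A) \<union> set (concat B)" "x = ?f a" by auto
    have "a \<ge> 1" using a(1) vA vB by (auto simp: valid_mat_def)
    then show "x \<noteq> [] \<and> 3 \<notin> set x" using set_bits[of a] a(2) bits_ne[of a] by auto
  qed
  then have m: "map ?f (concat A) = map ?f (concat B)" using e unfolding encode_mat_def by (rule join_inj)
  have "inj ?f" by (rule injI) (auto intro: bits_inj simp: inj_map_eq_map[OF inj_Suc])
  then have "concat A = concat B" using m by (simp add: inj_map_eq_map)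
  moreover have "\<forall>r\<in>set A \<union> set B. length r = k" using vA vB by (auto simp: valid_mat_def)
  moreover have "length A = length B" using vA vB by (simp add: valid_mat_def)
  ultimately show "A = B" by (intro concat_same_lengths_inj) auto
qed

lemma sum_list_concat: "sum_list (concat xss) = sum_list (map sum_list xss)"
  by (induction xss) auto

lemma sum_entries_valid_mat:
  "valid_mat k A \<Longrightarrow> (\<Sum>i<k. \<Sum>j<k. f (A ! i ! j)) = sum_list (map f (concat A))"
proof -
  assume v: "valid_mat k A"
  have "sum_list (map f (concat A)) = sum_list (map (\<lambda>r. sum_list (map f r)) A)"
    by (simp add: map_concat sum_list_concat comp_def)
  also have "\<dots> = (\<Sum>i<length A. sum_list (map f (A ! i)))"
    by (simp add: sum_list_sum_nth atLeast0LessThan)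
  also have "\<dots> = (\<Sum>i<k. \<Sum>j<k. f (A ! i ! j))"
  proof (rule sum.cong)
    show "{..<length A} = {..<k}" using v by (simp add: valid_mat_def)
  next
    fix i assume "i \<in> {..<k}"
    then have "length (A ! i) = k" using v by (auto simp: valid_mat_def)
    then show "sum_list (map f (A ! i)) = (\<Sum>j<k. f (A ! i ! j))"
      by (simp add: sum_list_sum_nth atLeast0LessThan)
  qed
  finally show ?thesis by simp
qed

lemma length_encode_mat:
  "valid_mat k A \<Longrightarrow> k \<ge> 1 \<Longrightarrow> length (encode_mat A) = size2_mat k A"
proof -
  assume v: "valid_mat k A" and k: "k \<ge> 1"
  have cA: "concat A \<noteq> []" using length_concat_valid_mat[OF v] k
    by (metis le_0_eq length_0_conv mult_is_0 not_one_le_zero)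
  have "length (encode_mat A) = sum_list (map length (map (\<lambda>a. map Suc (bits a)) (concat A))) + (length (concat A) - 1)"
    unfolding encode_mat_def using cA by (simp add: length_join)
  also have "sum_list (map length (map (\<lambda>a. map Suc (bits a)) (concat A)))
      = sum_list (map size2 (concat A))"
  proof -
    have "map (\<lambda>a. length (map Suc (bits a))) (concat A) = map size2 (concat A)"
      by (rule map_cong) (use v in \<open>auto simp: valid_mat_def length_bits\<close>)
    then show ?thesis by (simp only: map_map comp_def)
  qed
  moreover have "k * k \<ge> 1" using k by simp
  ultimately show ?thesis using v by (simp add: size2_mat_def sum_entries_valid_mat length_concat_valid_mat power2_eq_square)
qed

lemma encode_inst_Pair: "encode_inst (Ws, C) = join [4] (map encode_mat Ws @ [encode_mat C])"
  by (simp add: encode_inst_def)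

lemma length_encode_inst:
  assumes "k \<ge> 1" "(Ws, C) \<in> Uall k"
  shows "length (encode_inst (Ws, C)) = size2_inst k (Ws, C)"
proof -
  have v: "\<forall>W\<in>set Ws. valid_mat k W" "valid_mat k C" using assms(2) by (auto simp: Uall_def)
  have e1: "length (encode_inst (Ws, C))
      = sum_list (map length (map encode_mat Ws @ [encode_mat C])) + length Ws"
    by (simp add: encode_inst_Pair length_join)
  have e2: "map (\<lambda>W. length (encode_mat W)) Ws = map (size2_mat k) Ws"
    by (rule map_cong) (use v assms(1) in \<open>auto simp: length_encode_mat\<close>)
  show ?thesis using e1 e2 v assms(1) by (simp add: size2_inst_def length_encode_mat comp_def)
qed

definition listed :: "nat \<Rightarrow> inst set" where
  "listed k = {I \<in> Uall k. snd I \<in> set (fst I)}"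

section \<open>A machine recognising the instances with C among the W_i\<close>

text \<open>Tape symbols 1, 2, 3 are the input symbols, 5, 6, 7 the same symbols marked, 4 a matrix
  separator and 9 the left end marker written by the start phase; a separator or end marker is replaced by 8 or 10 once the
  block to its right has mismatched. States 5-12 shift the input one cell to the right (so that
  the end marker fits) and note whether a separator occurs; state 13 picks the rightmost unmarked
  symbol b of C, which states 13+b carry left to the candidate blocks; states 16+b scan every
  block from the right, marking its rightmost unmarked symbol if it equals b (states 19+b) and
  killing the block otherwise (states 22+b); state 26 returns to the right end. When C is fully
  marked, states 27 and 28 accept if some block is alive and completely marked.\<close>

definition member_tm :: tm where
"member_tm q s = (
  if q = 0 then (if s \<in> {1,2,3} then (4+s, 9, Rgt) else (3, s, Stay))
  else if 5 \<le> q \<and> q \<le> 8 then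
    (if s = 0 then (3, q-4, Stay) else if s \<le> 4 then (if s = 4 then 8+s else 4+s, q-4, Rgt) else (3, s, Stay))
  else if 9 \<le> q \<and> q \<le> 12 then
    (if s = 0 then (13, q-8, Stay) else if s \<le> 4 then (8+s, q-8, Rgt) else (3, s, Stay))
  else if q = 13 then
    (if s \<in> {5,6,7} then (13, s, Lft) else if s \<in> {1,2,3} then (13+s, s+4, Lft)
     else if s \<in> {4,8} then (27, s, Lft) else (3, s, Stay))
  else if 14 \<le> q \<and> q \<le> 16 then
    (if s \<in> {1,2,3} then (q, s, Lft) else if s \<in> {4,8} then (q+3, s, Lft) else (3, s, Stay))
  else if 17 \<le> q \<and> q \<le> 19 then
    (if s \<in> {5,6,7} then (q, s, Lft)
     else if s \<in> {1,2,3} then (if s = q - 16 then (q+3, s+4, Lft) else (q+6, s, Lft))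
     else if s \<in> {4,8} then (q, 8, Lft)
     else if s \<in> {9,10} then (26, 10, Rgt) else (3, s, Stay))
  else if 20 \<le> q \<and> q \<le> 22 then
    (if s \<in> {1,2,3} then (q, s, Lft) else if s \<in> {4,8} then (q-3, s, Lft)
     else if s \<in> {9,10} then (26, s, Rgt) else (3, s, Stay))
  else if 23 \<le> q \<and> q \<le> 25 then
    (if s \<in> {1,2,3} then (q, s, Lft) else if s \<in> {4,8} then (q-6, 8, Lft)
     else if s \<in> {9,10} then (26, 10, Rgt) else (3, s, Stay))
  else if q = 26 then (if s = 0 then (13, 0, Lft) else (26, s, Rgt))
  else if q = 27 then
    (if s \<in> {5,6,7,8} then (27, s, Lft) else if s \<in> {1,2,3} then (28, s, Lft)
     else if s \<in> {4,9} then (1, s, Stay) else (3, s, Stay))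
  else if q = 28 then
    (if s \<in> {1,2,3,5,6,7} then (28, s, Lft) else if s \<in> {4,8} then (27, s, Lft) else (3, s, Stay))
  else (3, 0, Stay))"

lemma member_tm_wf: "tm_wf 29 11 member_tm"
  unfolding tm_wf_def
proof (intro conjI allI impI)
  fix q s :: nat assume q: "q < 29" and s: "s < 11"
  have cs: "q = 0 \<or> (1 \<le> q \<and> q \<le> 4) \<or> (5 \<le> q \<and> q \<le> 8) \<or> (9 \<le> q \<and> q \<le> 12) \<or> q
      = 13 \<or> (14 \<le> q \<and> q \<le> 16)
    \<or> (17 \<le> q \<and> q \<le> 19) \<or> (20 \<le> q \<and> q \<le> 22) \<or> (23 \<le> q \<and> q \<le> 25) \<or> q = 26 \<or> q = 27 \<or> q = 28"
    using q by linarith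
  show "case member_tm q s of (q', w, d) \<Rightarrow> q' < 29 \<and> w < 11"
    using cs
  proof (elim disjE)
  qed (use s in \<open>auto simp add: member_tm_def\<close>)
qed simp_all

lemma member_tm_pick:
  "member_tm 13 s = (if s \<in> {5,6,7} then (13, s, Lft) else if s \<in> {1,2,3} then (13+s, s+4, Lft)
     else if s \<in> {4,8} then (27, s, Lft) else (3, s, Stay))"
  by (simp add: member_tm_def split del: if_split cong: if_cong)

lemma member_tm_carry: "b \<in> {1,2,3} \<Longrightarrow> member_tm (13+b) s =
    (if s \<in> {1,2,3} then (13+b, s, Lft) else if s \<in> {4,8} then (16+b, s, Lft) else (3, s, Stay))"
  by (elim insertE emptyE; hypsubst; simp add: member_tm_def split del: if_split cong: if_cong)

lemma member_tm_seek: "b \<in> {1,2,3} \<Longrightarrow> member_tm (16+b) s =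
    (if s \<in> {5,6,7} then (16+b, s, Lft)
     else if s \<in> {1,2,3} then (if s = b then (19+b, s+4, Lft) else (22+b, s, Lft))
     else if s \<in> {4,8} then (16+b, 8, Lft)
     else if s \<in> {9,10} then (26, 10, Rgt) else (3, s, Stay))"
  by (elim insertE emptyE; hypsubst; simp add: member_tm_def split del: if_split cong: if_cong)

lemma member_tm_matched: "b \<in> {1,2,3} \<Longrightarrow> member_tm (19+b) s =
    (if s \<in> {1,2,3} then (19+b, s, Lft) else if s \<in> {4,8} then (16+b, s, Lft)
     else if s \<in> {9,10} then (26, s, Rgt) else (3, s, Stay))"
  by (elim insertE emptyE; hypsubst; simp add: member_tm_def split del: if_split cong: if_cong)

lemma member_tm_mismatched: "b \<in> {1,2,3} \<Longrightarrow> member_tm (22+b) s =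
    (if s \<in> {1,2,3} then (22+b, s, Lft) else if s \<in> {4,8} then (16+b, 8, Lft)
     else if s \<in> {9,10} then (26, 10, Rgt) else (3, s, Stay))"
  by (elim insertE emptyE; hypsubst; simp add: member_tm_def split del: if_split cong: if_cong)

lemma member_tm_return: "member_tm 26 s = (if s = 0 then (13, 0, Lft) else (26, s, Rgt))"
  by (simp add: member_tm_def split del: if_split cong: if_cong)

lemma member_tm_final:
  "member_tm 27 s = (if s \<in> {5,6,7,8} then (27, s, Lft) else if s \<in> {1,2,3} then (28, s, Lft)
     else if s \<in> {4,9} then (1, s, Stay) else (3, s, Stay))"
  by (simp add: member_tm_def split del: if_split cong: if_cong)

lemma member_tm_final_skip:
  "member_tm 28 s = (if s \<in> {1,2,3,5,6,7} then (28, s, Lft) else if s \<in> {4,8} then (27, s, Lft) else (3, s, Stay))"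
  by (simp add: member_tm_def split del: if_split cong: if_cong)

lemma member_tm_start: "member_tm 0 s = (if s \<in> {1,2,3} then (4+s, 9, Rgt) else (3, s, Stay))"
  by (simp add: member_tm_def split del: if_split cong: if_cong)

lemma member_tm_shift: "x \<in> {1,2,3,4} \<Longrightarrow> member_tm (4+x) s =
    (if s = 0 then (3, x, Stay) else if s \<le> 4 then (if s = 4 then 8+s else 4+s, x, Rgt) else (3, s, Stay))"
  by (elim insertE emptyE; hypsubst; simp add: member_tm_def split del: if_split cong: if_cong)

lemma member_tm_shift_seen: "x \<in> {1,2,3,4} \<Longrightarrow> member_tm (8+x) s =
    (if s = 0 then (13, x, Stay) else if s \<le> 4 then (8+s, x, Rgt) else (3, s, Stay))"
  by (elim insertE emptyE; hypsubst; simp add: member_tm_def split del: if_split cong: if_cong)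

abbreviation run :: "nat \<Rightarrow> config \<Rightarrow> config" where
  "run n c \<equiv> (tm_step member_tm ^^ n) c"

definition cfg_last :: "nat \<Rightarrow> nat list \<Rightarrow> nat list \<Rightarrow> config" where
  "cfg_last q A X = (q, rev (butlast A), last A # X)"

definition cfg_next :: "nat \<Rightarrow> nat list \<Rightarrow> nat list \<Rightarrow> config" where
  "cfg_next q A X = (q, rev A, X)"

lemma run_halted: "fst c \<in> {1,2,3} \<Longrightarrow> (tm_step M ^^ n) c = c"
  by (cases c) (induction n, auto simp: tm_step_def)

lemma cfg_last_snoc: "cfg_last q (A @ [h]) X = (q, rev A, h # X)"
  by (simp add: cfg_last_def)

lemma step_cfg_last_left:
  assumes "member_tm q h = (q', w, Lft)" "q \<notin> {1,2,3}" "A \<noteq> []"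
  shows "tm_step member_tm (cfg_last q (A @ [h]) X) = cfg_last q' A (w # X)"
proof -
  have "rev A = last A # rev (butlast A)" using assms(3)
    by (metis append_butlast_last_id rev.simps(2) rev_append rev_singleton_conv rev_rev_ident) 
  then show ?thesis using assms unfolding cfg_last_snoc tm_step_def
    by (simp add: cfg_last_def split: list.splits)
qed

lemma step_cfg_next_right:
  assumes "member_tm q h = (q', w, Rgt)" "q \<notin> {1,2,3}"
  shows "tm_step member_tm (cfg_next q A (h # X)) = cfg_next q' (A @ [w]) X"
  using assms unfolding cfg_next_def tm_step_def by simp

lemma run_left_sweep:
  assumes "\<forall>x\<in>set v. member_tm q x = (q, x, Lft)" "q \<notin> {1,2,3}" "A \<noteq> []"
  shows "run (length v) (cfg_last q (A @ v) X) = cfg_last q A (v @ X)"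
  using assms(1)
proof (induction v arbitrary: X rule: rev_induct)
  case Nil then show ?case by simp
next
  case (snoc x v)
  have "run (length (v @ [x])) (cfg_last q (A @ v @ [x]) X)
      = run (length v) (tm_step member_tm (cfg_last q ((A @ v) @ [x]) X))"
    by (simp only: length_append_singleton funpow_Suc_right comp_def append_assoc)
  also have "tm_step member_tm (cfg_last q ((A @ v) @ [x]) X) = cfg_last q (A @ v) (x # X)"
    using snoc.prems assms(2,3) by (intro step_cfg_last_left) auto
  also have "run (length v) (cfg_last q (A @ v) (x # X)) = cfg_last q A (v @ x # X)"
    using snoc by simp
  finally show ?case by simp
qed

lemma run_right_sweep:
  assumes "\<forall>x\<in>set v. member_tm q x = (q, x, Rgt)" "q \<notin> {1,2,3}"
  shows "run (length v) (cfg_next q A (v @ X)) = cfg_next q (A @ v) X"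
  using assms(1)
proof (induction v arbitrary: A)
  case Nil then show ?case by simp
next
  case (Cons x v)
  have "run (length (x # v)) (cfg_next q A ((x # v) @ X))
      = run (length v) (tm_step member_tm (cfg_next q A (x # (v @ X))))"
    by (simp only: length_Cons funpow_Suc_right comp_def append_Cons)
  also have "tm_step member_tm (cfg_next q A (x # (v @ X))) = cfg_next q (A @ [x]) (v @ X)"
    using Cons.prems assms(2) by (intro step_cfg_next_right) auto
  also have "run (length v) (cfg_next q (A @ [x]) (v @ X)) = cfg_next q ((A @ [x]) @ v) X"
    using Cons by simp
  finally show ?case by simp
qed

lemma run_add: "run (m + n) c = run m (run n c)"
  by (simp add: funpow_add)

lemma run_Suc: "run (Suc n) c = run n (tm_step member_tm c)"
  by (simp only: funpow_Suc_right comp_def)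

lemma run_one: "run 1 c = tm_step member_tm c" by simp

lemma run_halted_mono:
  assumes "fst (run t c) \<in> {1,2,3}" "t \<le> t'"
  shows "run t' c = run t c"
proof -
  have "t' = (t' - t) + t" using assms(2) by simp
  then have "run t' c = run (t' - t) (run t c)" by (metis run_add)
  also have "\<dots> = run t c" using assms(1) by (rule run_halted)
  finally show ?thesis .
qed

lemma run_return:
  assumes "\<forall>x\<in>set V. x \<noteq> 0" "tl0 \<in> {[],[0]}" "A @ V \<noteq> []"
  shows "run (1 + length V) (cfg_next 26 A (V @ tl0)) = cfg_last 13 (A @ V) [0]"
proof -
  have "run (length V) (cfg_next 26 A (V @ tl0)) = cfg_next 26 (A @ V) tl0"
    by (rule run_right_sweep) (use assms(1) in \<open>auto simp: member_tm_return\<close>)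
  moreover have "tm_step member_tm (cfg_next 26 (A @ V) tl0) = cfg_last 13 (A @ V) [0]"
  proof -
    have "rev (A @ V) = last (A @ V) # rev (butlast (A @ V))" using assms(3)
      by (metis append_butlast_last_id rev_eq_Cons_iff rev_rev_ident)
    then show ?thesis using assms(2) by (auto simp: cfg_next_def cfg_last_def tm_step_def member_tm_return)
  qed
  ultimately show ?thesis by (simp only: run_add run_one)
qed

definition shift_state :: "bool \<Rightarrow> nat \<Rightarrow> nat" where
  "shift_state seen x = (if seen then 8 + x else 4 + x)"

lemma run_shift:
  assumes "x \<in> {1,2,3,4}" "set ys \<subseteq> {1,2,3,4}"
  shows "run (length ys) (cfg_next (shift_state seen x) A ys) = cfg_next (shift_state (seen \<or> 4 \<in> set ys) (last (x # ys))) (A @ butlast (x # ys)) []"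
  using assms
proof (induction ys arbitrary: A x seen)
  case Nil then show ?case by simp
next
  case (Cons y ys)
  have y: "y \<in> {1,2,3,4}" using Cons.prems by auto
  have "tm_step member_tm (cfg_next (shift_state seen x) A (y # ys))
      = cfg_next (shift_state (seen \<or> y = 4) y) (A @ [x]) ys"
  proof (rule step_cfg_next_right)
    have y_bounds: "y \<noteq> 0" "y \<le> 4" using y by auto
    show "member_tm (shift_state seen x) y = (shift_state (seen \<or> y = 4) y, x, Rgt)"
    proof (cases seen)
      case True then show ?thesis using Cons.prems(1) y_bounds
        by (simp add: shift_state_def member_tm_shift_seen split del: if_split)
    next
      case False then show ?thesis using Cons.prems(1) y_bounds
        by (simp add: shift_state_def member_tm_shift split del: if_split)
    qed
    show "shift_state seen x \<notin> {1,2,3}" using Cons.prems(1) by (auto simp: shift_state_def)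
  qed
  then have "run (length (y # ys)) (cfg_next (shift_state seen x) A (y # ys))
      = run (length ys) (cfg_next (shift_state (seen \<or> y = 4) y) (A @ [x]) ys)"
    by (simp only: length_Cons run_Suc)
  also have "\<dots> = cfg_next (shift_state ((seen \<or> y = 4) \<or> 4 \<in> set ys) (last (y # ys))) ((A @ [x]) @ butlast (y # ys)) []"
    using Cons.IH[where A="A @ [x]" and x=y and seen="seen \<or> y = 4"] Cons.prems y by simp
  also have "\<dots> = cfg_next (shift_state (seen \<or> 4 \<in> set (y # ys)) (last (x # y # ys))) (A @ butlast (x # y # ys)) []"
    by (simp add: disj_commute disj_left_commute)
  finally show ?case .
qed

lemma run_start:
  assumes "x0 \<in> {1,2,3}" "set xs \<subseteq> {1,2,3,4}"
  shows "run (length (x0 # xs) + 1) (0, [], x0 # xs) = cfg_last (if 4 \<in> set xs then 13 else 3) (9 # x0 # xs) []"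
proof -
  have s0: "tm_step member_tm (0, [], x0 # xs) = cfg_next (shift_state False x0) [9] xs"
    using assms(1) by (auto simp: tm_step_def member_tm_start cfg_next_def shift_state_def)
  have sl: "run (length xs) (cfg_next (shift_state False x0) [9] xs)
      = cfg_next (shift_state (4 \<in> set xs) (last (x0 # xs))) ([9] @ butlast (x0 # xs)) []"
    using run_shift[of x0 xs False "[9]"] assms by auto
  have l: "last (x0 # xs) \<in> {1,2,3,4}"
  proof -
    have "last (x0 # xs) \<in> set (x0 # xs)" by (rule last_in_set) simp
    moreover have "set (x0 # xs) \<subseteq> {1,2,3,4}" using assms by auto
    ultimately show ?thesis by blast
  qed
  have se: "tm_step member_tm (cfg_next (shift_state sn l) B [])
      = cfg_last (if sn then 13 else 3) (B @ [l]) []" if "l \<in> {1,2,3,4}" for sn l B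
  proof (cases sn)
    case True then show ?thesis using that by (simp add: tm_step_def cfg_next_def cfg_last_def shift_state_def member_tm_shift_seen)
  next
    case False then show ?thesis using that by (simp add: tm_step_def cfg_next_def cfg_last_def shift_state_def member_tm_shift)
  qed
  have "run (length (x0 # xs) + 1) (0, [], x0 # xs)
      = tm_step member_tm (run (length xs) (tm_step member_tm (0, [], x0 # xs)))"
  proof -
    have eq: "length (x0 # xs) + 1 = 1 + (length xs + 1)" by simp
    show ?thesis by (simp only: eq run_add run_one)
  qed
  also have "\<dots> = cfg_last (if 4 \<in> set xs then 13 else 3) (([9] @ butlast (x0 # xs)) @ [last (x0 # xs)]) []"
    using s0 sl se[OF l] by simp
  also have "([9] @ butlast (x0 # xs)) @ [last (x0 # xs)] = 9 # x0 # xs" by simp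
  finally show ?thesis .
qed

text \<open>A candidate (w, k, d) is the encoding w of some W_i together with the number k of its trailing
  symbols already matched against C (and marked) and a flag d recording a mismatch. In
  cands_tape f the flag f says that the first boundary is the left end marker.\<close>

type_synonym cand = "nat list \<times> nat \<times> bool"

abbreviation marked :: "nat list \<Rightarrow> nat list" where
  "marked xs \<equiv> map (\<lambda>x. x + 4) xs"

definition block_tape :: "nat list \<Rightarrow> nat \<Rightarrow> nat list" where
  "block_tape w k = take (length w - k) w @ marked (drop (length w - k) w)"

definition boundary_sym :: "bool \<Rightarrow> bool \<Rightarrow> nat" where
  "boundary_sym f d = (if f then (if d then 10 else 9) else (if d then 8 else 4))"

fun cands_tape :: "bool \<Rightarrow> cand list \<Rightarrow> nat list" where
  "cands_tape f [] = []"
| "cands_tape f ((w,k,d) # bs) = boundary_sym f d # block_tape w k @ cands_tape False bs"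

definition cand_step :: "nat \<Rightarrow> cand \<Rightarrow> cand" where
  "cand_step b x = (case x of (w,k,d) \<Rightarrow>
     if k < length w \<and> w ! (length w - Suc k) = b then (w, Suc k, d) else (w, k, True))"

definition cand_ok :: "cand \<Rightarrow> bool" where
  "cand_ok x = (case x of (w,k,d) \<Rightarrow> w \<noteq> [] \<and> set w \<subseteq> {1,2,3} \<and> k \<le> length w)"

lemma cands_tape_snoc:
  "cands_tape f (bs @ [(w,k,d)]) = cands_tape f bs @ boundary_sym (f \<and> bs = []) d # block_tape w k"
  by (induction bs arbitrary: f) auto

lemma cands_tape_snoc_split:
  assumes "cand_ok (w, k, d)"
  defines "u \<equiv> take (length w - k) w" and "mm \<equiv> drop (length w - k) w"
  shows "cands_tape f (bs @ [(w, k, d)]) = cands_tape f bs @ [boundary_sym (f \<and> bs = []) d] @ u @ marked mm"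
    and "set u \<subseteq> {1,2,3}" and "set mm \<subseteq> {1,2,3}"
  using assms by (auto simp: cands_tape_snoc block_tape_def cand_ok_def dest: in_set_takeD in_set_dropD)

lemma cands_tape_ne: "bs \<noteq> [] \<Longrightarrow> cands_tape f bs \<noteq> []"
  by (cases bs) auto

lemma length_block_tape: "length (block_tape w k) = length w"
  by (simp add: block_tape_def)

lemma fst_cand_step: "fst (cand_step b x) = fst x"
  by (cases x) (auto simp: cand_step_def)

lemma cand_ok_step: "cand_ok x \<Longrightarrow> cand_ok (cand_step b x)"
  by (cases x) (auto simp: cand_step_def cand_ok_def)

lemma cand_step_tape:
  fixes b :: nat and f :: bool
  assumes "cand_ok (w,k,d)"
  defines "u \<equiv> take (length w - k) w" and "mm \<equiv> drop (length w - k) w"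
  defines "ok \<equiv> (u \<noteq> [] \<and> last u = b)"
  shows "(case cand_step b (w,k,d) of (w',k',d') \<Rightarrow> boundary_sym f d' # block_tape w' k') =
     (if ok then boundary_sym f d else boundary_sym f True) # (if ok then butlast u @ marked (last u # mm) else u @ marked mm)"
proof -
  have w: "w \<noteq> []" "k \<le> length w" using assms(1) by (auto simp: cand_ok_def)
  have okiff: "ok \<longleftrightarrow> k < length w \<and> w ! (length w - Suc k) = b"
  proof -
    have "u \<noteq> [] \<longleftrightarrow> k < length w" using w by (auto simp: u_def)
    moreover have "k < length w \<Longrightarrow> last u = w ! (length w - Suc k)"
      using w by (simp add: u_def last_conv_nth)
    ultimately show ?thesis unfolding ok_def by auto
  qed
  show ?thesis
  proof (cases ok)
    case True
    then have k: "k < length w" and e: "w ! (length w - Suc k) = b" using okiff by auto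
    have "block_tape w (Suc k) = butlast u @ marked (last u # mm)"
    proof -
      have "butlast u = take (length w - Suc k) w" using k by (simp add: u_def butlast_take)
      moreover have "drop (length w - Suc k) w = w ! (length w - Suc k) # mm"
        using k unfolding mm_def by (metis Cons_nth_drop_Suc Suc_diff_Suc diff_less zero_less_Suc less_le_trans le_add1 w(1) length_greater_0_conv)
      moreover have "last u = w ! (length w - Suc k)" using k w by (simp add: u_def last_conv_nth)
      ultimately show ?thesis by (simp add: block_tape_def)
    qed
    then show ?thesis using True k e by (simp add: cand_step_def)
  next
    case False
    then show ?thesis using okiff by (auto simp: cand_step_def block_tape_def u_def mm_def)
  qed
qed

lemma length_cands_tape_step: "length (cands_tape f (map (cand_step b) bs)) = length (cands_tape f bs)"
proof (induction bs arbitrary: f)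
  case Nil then show ?case by simp
next
  case (Cons x bs)
  obtain w k d where x: "x = (w,k,d)" by (cases x)
  obtain w' k' d' where e: "cand_step b (w,k,d) = (w',k',d')" by (cases "cand_step b (w,k,d)")
  have "w' = w" using fst_cand_step[of b "(w,k,d)"] e by simp
  then show ?case using Cons x e by (simp add: length_block_tape)
qed

lemma zero_notin_cands_tape:
  "\<forall>x\<in>set bs. cand_ok x \<Longrightarrow> 0 \<notin> set (cands_tape f bs)"
proof (induction bs arbitrary: f)
  case Nil then show ?case by simp
next
  case (Cons x bs)
  obtain w k d where x: "x = (w,k,d)" by (cases x)
  have "set w \<subseteq> {1,2,3}" using Cons.prems x by (auto simp: cand_ok_def)
  then have "0 \<notin> set (block_tape w k)" by (auto simp: block_tape_def dest: in_set_takeD)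
  then show ?case using Cons x by (auto simp: boundary_sym_def)
qed

lemma cands_tape_init:
  "ws \<noteq> [] \<Longrightarrow> cands_tape f (map (\<lambda>w. (w, 0, False)) ws) = boundary_sym f False # join [4] ws"
proof (induction ws arbitrary: f rule: induct_list012)
  case 1 then show ?case by simp
next
  case (2 x) then show ?case by (simp add: block_tape_def)
next
  case (3 x y r) then show ?case by (simp add: block_tape_def boundary_sym_def)
qed

lemma run_seek_block:
  assumes b: "b \<in> {1,2,3}" and u: "set u \<subseteq> {1,2,3}" and mm: "set mm \<subseteq> {1,2,3}"
    and z: "z \<in> {4,8,9,10}" and A: "z \<in> {4,8} \<Longrightarrow> A \<noteq> []"
  defines "ok \<equiv> (u \<noteq> [] \<and> last u = b)"
  defines "nc \<equiv> (if ok then butlast u @ marked (last u # mm) else u @ marked mm)"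
  defines "nz \<equiv> (if ok then z else if z \<in> {4,8} then 8 else 10)"
  shows "run (length u + length mm + 1) (cfg_last (16+b) (A @ [z] @ u @ marked mm) R) =
    (if z \<in> {4,8} then cfg_last (16+b) A (nz # nc @ R) else cfg_next 26 (A @ [nz]) (nc @ R))"
proof -
  have s1: "run (length (marked mm)) (cfg_last (16+b) ((A @ [z] @ u) @ marked mm) R)
      = cfg_last (16+b) (A @ [z] @ u) (marked mm @ R)"
    by (rule run_left_sweep) (use b mm in \<open>auto simp: member_tm_seek\<close>)
  have atz: "tm_step member_tm (cfg_last q (A @ [z]) X)
      = (if z \<in> {4,8} then cfg_last (16+b) A (zz # X) else cfg_next 26 (A @ [zz]) X)"
    if "member_tm q z = (if z \<in> {4,8} then (16+b, zz, Lft) else (26, zz, Rgt))" "q \<notin> {1,2,3}" for q zz X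
  proof (cases "z \<in> {4,8}")
    case True
    then show ?thesis using that A by (simp add: step_cfg_last_left)
  next
    case False
    then show ?thesis using that by (simp add: cfg_last_snoc tm_step_def cfg_next_def)
  qed
  show ?thesis
  proof (cases u rule: rev_cases)
    case Nil
    have "run (length u + length mm + 1) (cfg_last (16+b) (A @ [z] @ u @ marked mm) R)
        = tm_step member_tm (run (length (marked mm)) (cfg_last (16+b) ((A @ [z] @ u) @ marked mm) R))"
      using Nil by simp
    also have "\<dots> = tm_step member_tm (cfg_last (16+b) (A @ [z]) (marked mm @ R))" using s1 Nil by simp
    also have "\<dots> = (if z \<in> {4,8} then cfg_last (16+b) A (nz # marked mm @ R) else cfg_next 26 (A @ [nz]) (marked mm @ R))"
      by (rule atz) (use z b Nil in \<open>auto simp: member_tm_seek nz_def ok_def\<close>)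
    also have "\<dots> = (if z \<in> {4,8} then cfg_last (16+b) A (nz # nc @ R) else cfg_next 26 (A @ [nz]) (nc @ R))"
      using Nil by (simp add: nc_def ok_def)
    finally show ?thesis .
  next
    case (snoc u' t)
    have t: "t \<in> {1,2,3}" and u': "set u' \<subseteq> {1,2,3}" using u snoc by auto
    define q' where "q' = (if t = b then 19 + b else 22 + b)"
    define t' where "t' = (if t = b then t + 4 else t)"
    have st: "tm_step member_tm (cfg_last (16+b) ((A @ [z] @ u') @ [t]) X)
        = cfg_last q' (A @ [z] @ u') (t' # X)" for X
      by (rule step_cfg_last_left) (use t b in \<open>auto simp: member_tm_seek q'_def t'_def\<close>)
    have lp: "run (length u') (cfg_last q' ((A @ [z]) @ u') X) = cfg_last q' (A @ [z]) (u' @ X)" for X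
      by (rule run_left_sweep) (use u' b in \<open>auto simp: member_tm_matched member_tm_mismatched q'_def\<close>)
    have "run (length u + length mm + 1) (cfg_last (16+b) (A @ [z] @ u @ marked mm) R)
      = tm_step member_tm (run (length u') (tm_step member_tm (run (length (marked mm)) (cfg_last (16+b) ((A @ [z] @ u) @ marked mm) R))))"
    proof -
      have "length u + length mm + 1 = 1 + (length u' + (1 + length (marked mm)))" using snoc by simp
      then show ?thesis by (simp only: run_add run_one append_assoc)
    qed
    also have "\<dots> = tm_step member_tm (run (length u') (tm_step member_tm (cfg_last (16+b) ((A @ [z] @ u') @ [t]) (marked mm @ R))))"
      using s1 snoc by simp
    also have "\<dots> = tm_step member_tm (cfg_last q' (A @ [z]) (u' @ t' # marked mm @ R))"
      using st lp by simp
    also have "\<dots> = (if z \<in> {4,8} then cfg_last (16+b) A (nz # u' @ t' # marked mm @ R) else cfg_next 26 (A @ [nz]) (u' @ t' # marked mm @ R))"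
      by (rule atz) (use z b snoc t in \<open>auto simp: member_tm_matched member_tm_mismatched nz_def ok_def q'_def t'_def\<close>)
    also have "\<dots> = (if z \<in> {4,8} then cfg_last (16+b) A (nz # nc @ R) else cfg_next 26 (A @ [nz]) (nc @ R))"
      using snoc by (simp add: nc_def ok_def t'_def)
    finally show ?thesis .
  qed
qed

lemma run_seek_all:
  assumes "bs \<noteq> []" "\<forall>x\<in>set bs. cand_ok x" "b \<in> {1,2,3}"
  shows "run (length (cands_tape True bs)) (cfg_last (16+b) (cands_tape True bs) R)
     = cfg_next 26 [hd (cands_tape True (map (cand_step b) bs))] (tl (cands_tape True (map (cand_step b) bs)) @ R)"
  using assms(1,2)
proof (induction bs arbitrary: R rule: rev_induct)
  case Nil then show ?case by simp
next
  case (snoc x bs)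
  obtain w k d where x: "x = (w,k,d)" by (cases x)
  have okx: "cand_ok (w,k,d)" using snoc.prems x by auto
  define u where "u = take (length w - k) w"
  define mm where "mm = drop (length w - k) w"
  define ok where "ok = (u \<noteq> [] \<and> last u = b)"
  define nc where "nc = (if ok then butlast u @ marked (last u # mm) else u @ marked mm)"
  define z where "z = boundary_sym (bs = []) d"
  define nz where "nz = (if ok then z else if z \<in> {4,8} then 8 else 10)"
  have tape: "cands_tape True (bs @ [x]) = cands_tape True bs @ [z] @ u @ marked mm"
    and u: "set u \<subseteq> {1,2,3}" and mm: "set mm \<subseteq> {1,2,3}"
    using cands_tape_snoc_split(1)[OF okx, of True bs] cands_tape_snoc_split(2,3)[OF okx] x
    by (simp_all add: u_def mm_def z_def)
  have newb: "cands_tape True (map (cand_step b) (bs @ [x]))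
      = cands_tape True (map (cand_step b) bs) @ nz # nc"
  proof -
    obtain w' k' d' where e: "cand_step b (w,k,d) = (w',k',d')" by (cases "cand_step b (w,k,d)")
    have "cands_tape True (map (cand_step b) (bs @ [x]))
        = cands_tape True (map (cand_step b) bs) @ boundary_sym (bs = []) d' # block_tape w' k'"
      using x e by (simp add: cands_tape_snoc)
    also have "boundary_sym (bs = []) d' # block_tape w' k' = nz # nc"
      using cand_step_tape[OF okx, where b=b and f="bs = []"] e
      unfolding nz_def nc_def z_def ok_def u_def mm_def by (auto simp: boundary_sym_def)
    finally show ?thesis .
  qed
  have zin: "z \<in> {4,8,9,10}" by (auto simp: z_def boundary_sym_def)
  show ?case
  proof (cases "bs = []")
    case True
    have "run (length (cands_tape True (bs @ [x]))) (cfg_last (16+b) (cands_tape True (bs @ [x])) R)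
        = run (length u + length mm + 1) (cfg_last (16+b) ([] @ [z] @ u @ marked mm) R)"
      using True tape by simp
    also have "\<dots> = cfg_next 26 ([] @ [nz]) (nc @ R)"
    proof -
      have sb: "run (length u + length mm + 1) (cfg_last (16+b) ([] @ [z] @ u @ marked mm) R) =
          (if z \<in> {4,8} then cfg_last (16+b) [] (nz # nc @ R) else cfg_next 26 ([] @ [nz]) (nc @ R))"
        unfolding nz_def nc_def ok_def by (rule run_seek_block[OF assms(3) u mm zin]) (use True in \<open>auto simp add: z_def boundary_sym_def split: if_splits\<close>)
      have zn: "(z \<in> {4,8}) = False" using True by (simp add: z_def boundary_sym_def)
      show ?thesis using sb by (simp only: zn if_False)
    qed
    finally show ?thesis using newb True by simp
  next
    case False
    have A: "cands_tape True bs \<noteq> []" using False by (rule cands_tape_ne)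
    have z48: "z \<in> {4,8}" using False by (auto simp: z_def boundary_sym_def)
    have "run (length (cands_tape True (bs @ [x]))) (cfg_last (16+b) (cands_tape True (bs @ [x])) R)
        = run (length (cands_tape True bs)) (run (length u + length mm + 1) (cfg_last (16+b) (cands_tape True bs @ [z] @ u @ marked mm) R))"
    proof -
      have l: "length (cands_tape True (bs @ [x])) = length (cands_tape True bs) + (length u + length mm + 1)"
        using tape by simp
      show ?thesis unfolding l unfolding tape by (rule run_add)
    qed
    also have "run (length u + length mm + 1) (cfg_last (16+b) (cands_tape True bs @ [z] @ u @ marked mm) R)
        = cfg_last (16+b) (cands_tape True bs) (nz # nc @ R)"
    proof -
      have sb: "run (length u + length mm + 1) (cfg_last (16+b) (cands_tape True bs @ [z] @ u @ marked mm) R) =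
          (if z \<in> {4,8} then cfg_last (16+b) (cands_tape True bs) (nz # nc @ R) else cfg_next 26 (cands_tape True bs @ [nz]) (nc @ R))"
        unfolding nz_def nc_def ok_def by (rule run_seek_block[OF assms(3) u mm zin]) (use A in simp)
      have zn: "(z \<in> {4,8}) = True" using z48 by simp
      show ?thesis using sb by (simp only: zn if_True)
    qed
    also have "run (length (cands_tape True bs)) (cfg_last (16+b) (cands_tape True bs) (nz # nc @ R))
        = cfg_next 26 [hd (cands_tape True (map (cand_step b) bs))] (tl (cands_tape True (map (cand_step b) bs)) @ nz # nc @ R)"
      using snoc.IH[of "nz # nc @ R"] snoc.prems False by auto
    finally show ?thesis using newb False cands_tape_ne[of "map (cand_step b) bs" True] by simp
  qed
qed

lemma run_compare_bit:
  assumes bs: "bs \<noteq> []" "\<forall>x\<in>set bs. cand_ok x" and b: "b \<in> {1,2,3}"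
    and uc: "set uc' \<subseteq> {1,2,3}" and mc: "set mc \<subseteq> {1,2,3}" and tl0: "tl0 \<in> {[],[0]}"
  shows "\<exists>t \<le> 2 * length (cands_tape True bs @ [4] @ uc' @ [b] @ marked mc).
    run t (cfg_last 13 (cands_tape True bs @ [4] @ uc' @ [b] @ marked mc) tl0)
      = cfg_last 13 (cands_tape True (map (cand_step b) bs) @ [4] @ uc' @ marked (b # mc)) [0]"
proof -
  define W where "W = cands_tape True bs"
  define W' where "W' = cands_tape True (map (cand_step b) bs)"
  have Wne: "W \<noteq> []" and W'ne: "W' \<noteq> []" using bs by (auto simp: W_def W'_def cands_tape_ne)
  have lW: "length W' = length W" by (simp add: W_def W'_def length_cands_tape_step)
  have s1: "run (length (marked mc)) (cfg_last 13 ((W @ [4] @ uc' @ [b]) @ marked mc) tl0)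
      = cfg_last 13 (W @ [4] @ uc' @ [b]) (marked mc @ tl0)"
    by (rule run_left_sweep) (use mc in \<open>auto simp: member_tm_pick\<close>)
  have s2: "tm_step member_tm (cfg_last 13 ((W @ [4] @ uc') @ [b]) X)
      = cfg_last (13+b) (W @ [4] @ uc') ((b+4) # X)" for X
    by (rule step_cfg_last_left) (use b in \<open>auto simp: member_tm_pick\<close>)
  have s3: "run (length uc') (cfg_last (13+b) ((W @ [4]) @ uc') X)
      = cfg_last (13+b) (W @ [4]) (uc' @ X)" for X
    by (rule run_left_sweep) (use uc b in \<open>auto simp: member_tm_carry\<close>)
  have s4: "tm_step member_tm (cfg_last (13+b) (W @ [4]) X) = cfg_last (16+b) W (4 # X)" for X
    by (rule step_cfg_last_left) (use b Wne in \<open>auto simp: member_tm_carry\<close>)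
  have s5: "run (length W) (cfg_last (16+b) W X) = cfg_next 26 [hd W'] (tl W' @ X)" for X
    unfolding W_def W'_def by (rule run_seek_all[OF bs b])
  define V where "V = tl W' @ 4 # uc' @ (b+4) # marked mc"
  have Vnz: "\<forall>x\<in>set V. x \<noteq> 0"
  proof -
    have "0 \<notin> set W'" unfolding W'_def by (rule zero_notin_cands_tape) (use bs cand_ok_step in auto)
    then have "0 \<notin> set (tl W')" by (meson list.set_sel(2) W'ne)
    then have "\<forall>x\<in>set (tl W'). x \<noteq> 0" by (metis)
    then show ?thesis using uc unfolding V_def by auto
  qed
  have s6: "run (1 + length V) (cfg_next 26 [hd W'] (V @ tl0)) = cfg_last 13 ([hd W'] @ V) [0]"
    by (rule run_return[OF Vnz tl0]) simp
  have fin: "[hd W'] @ V = W' @ [4] @ uc' @ marked (b # mc)" using W'ne by (simp add: V_def)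
  define t where "t = (1 + length V) + (length W + (1 + (length uc' + (1 + length (marked mc)))))"
  have "run t (cfg_last 13 (W @ [4] @ uc' @ [b] @ marked mc) tl0)
      = cfg_last 13 (W' @ [4] @ uc' @ marked (b # mc)) [0]"
  proof -
    have "run t (cfg_last 13 (W @ [4] @ uc' @ [b] @ marked mc) tl0)
      = run (1 + length V) (run (length W) (tm_step member_tm (run (length uc') (tm_step member_tm
          (run (length (marked mc)) (cfg_last 13 ((W @ [4] @ uc' @ [b]) @ marked mc) tl0))))))"
      unfolding t_def by (simp only: run_add run_one append_assoc)
    also have "\<dots> = run (1 + length V) (cfg_next 26 [hd W'] (V @ tl0))"
      using s1 s2 s3 s4 s5 by (simp add: V_def)
    also have "\<dots> = cfg_last 13 (W' @ [4] @ uc' @ marked (b # mc)) [0]" using s6 fin by simp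
    finally show ?thesis .
  qed
  moreover have "t \<le> 2 * length (W @ [4] @ uc' @ [b] @ marked mc)"
    using lW W'ne Wne by (simp add: t_def V_def)
  ultimately show ?thesis unfolding W_def W'_def by blast
qed

definition cand_matched :: "cand \<Rightarrow> bool" where
  "cand_matched x = (case x of (w,k,d) \<Rightarrow> k = length w \<and> \<not> d)"

lemma drop_diff_Suc:
  "p < length xs \<Longrightarrow> drop (length xs - Suc p) xs = xs ! (length xs - Suc p) # drop (length xs - p) xs"
  by (metis Cons_nth_drop_Suc Suc_diff_Suc diff_less zero_less_Suc less_le_trans le_add1 le_less_trans not_less0 length_greater_0_conv list.size(3) zero_less_diff)

definition cand_inv :: "nat list \<Rightarrow> nat \<Rightarrow> cand \<Rightarrow> bool" where
  "cand_inv c p x = (case x of (w,k,d) \<Rightarrow> cand_ok (w,k,d) \<and>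
     ((\<not>d) = (p \<le> length w \<and> drop (length w - p) w = drop (length c - p) c)) \<and> (\<not>d \<longrightarrow> k = p))"

lemma cand_inv_step:
  assumes p: "p < length c" and iv: "cand_inv c p x"
  shows "cand_inv c (Suc p) (cand_step (c ! (length c - Suc p)) x)"
proof -
  obtain w k d where x: "x = (w,k,d)" by (cases x)
  define b where "b = c ! (length c - Suc p)"
  have ok: "cand_ok (w,k,d)" and e1: "(\<not>d) = (p \<le> length w \<and> drop (length w - p) w = drop (length c - p) c)"
    and e2: "\<not>d \<longrightarrow> k = p" using iv x by (auto simp: cand_inv_def)
  have dc: "drop (length c - Suc p) c = b # drop (length c - p) c" using p by (simp add: drop_diff_Suc b_def)
  have imp: "Suc p \<le> length w \<and> drop (length w - Suc p) w = drop (length c - Suc p) c \<Longrightarrow>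
      p \<le> length w \<and> drop (length w - p) w = drop (length c - p) c \<and> w ! (length w - Suc p) = b"
  proof -
    assume a: "Suc p \<le> length w \<and> drop (length w - Suc p) w = drop (length c - Suc p) c"
    have "drop (length w - Suc p) w = w ! (length w - Suc p) # drop (length w - p) w"
      using a by (intro drop_diff_Suc) simp
    then show ?thesis using a dc by simp
  qed
  show ?thesis
  proof (cases "k < length w \<and> w ! (length w - Suc k) = b")
    case True
    then have u: "cand_step b x = (w, Suc k, d)" using x by (simp add: cand_step_def)
    have okn: "cand_ok (w, Suc k, d)" using ok True by (auto simp: cand_ok_def)
    show ?thesis
    proof (cases d)
      case False
      then have k: "k = p" and sp: "p \<le> length w" "drop (length w - p) w = drop (length c - p) c"
        using e1 e2 by auto
      have "drop (length w - Suc p) w = w ! (length w - Suc p) # drop (length w - p) w"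
        using True k by (intro drop_diff_Suc) simp
      then have "drop (length w - Suc p) w = drop (length c - Suc p) c" using True k sp dc by simp
      then show ?thesis using u okn False k True unfolding b_def[symmetric] by (simp add: cand_inv_def)
    next
      case dT: True
      then show ?thesis using u okn imp e1 unfolding b_def[symmetric] by (auto simp: cand_inv_def)
    qed
  next
    case False
    then have u: "cand_step b x = (w, k, True)" using x by (simp add: cand_step_def)
    have "\<not> (Suc p \<le> length w \<and> drop (length w - Suc p) w = drop (length c - Suc p) c)"
    proof
      assume a: "Suc p \<le> length w \<and> drop (length w - Suc p) w = drop (length c - Suc p) c"
      then have "\<not> d" "w ! (length w - Suc p) = b" using imp e1 by auto
      then show False using False e2 a by auto
    qed
    then show ?thesis using u ok unfolding b_def[symmetric] by (simp add: cand_inv_def cand_ok_def)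
  qed
qed

lemma cand_inv_final:
  "cand_inv c (length c) x \<Longrightarrow> cand_matched x \<longleftrightarrow> fst x = c"
  by (cases x) (auto simp: cand_inv_def cand_matched_def)

fun cands_after :: "nat list \<Rightarrow> cand list \<Rightarrow> nat \<Rightarrow> cand list" where
  "cands_after c bs 0 = bs"
| "cands_after c bs (Suc p) = map (cand_step (c ! (length c - Suc p))) (cands_after c bs p)"

lemma cand_inv_after:
  "p \<le> length c \<Longrightarrow> \<forall>x\<in>set bs. cand_inv c 0 x \<Longrightarrow> \<forall>x\<in>set (cands_after c bs p). cand_inv c p x"
  by (induction p) (auto intro: cand_inv_step)

lemma length_cands_after: "length (cands_tape f (cands_after c bs p)) = length (cands_tape f bs)"
  by (induction p) (auto simp: length_cands_tape_step)

lemma cands_after_ne: "bs \<noteq> [] \<Longrightarrow> cands_after c bs p \<noteq> []"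
  by (induction p) auto

lemma map_fst_cands_after: "map fst (cands_after c bs p) = map fst bs"
  by (induction p) (auto simp: fst_cand_step comp_def)

lemma run_compare_bits:
  assumes bs: "bs \<noteq> []" "\<forall>x\<in>set bs. cand_inv c 0 x" and c: "set c \<subseteq> {1,2,3}"
    and p: "p \<le> length c"
  shows "\<exists>t \<le> p * (2 * length (cands_tape True bs @ [4] @ c)). \<exists>tl0\<in>{[],[0]}.
     run t (cfg_last 13 (cands_tape True bs @ [4] @ c) [])
       = cfg_last 13 (cands_tape True (cands_after c bs p) @ [4] @ take (length c - p) c @ marked (drop (length c - p) c)) tl0"
  using p
proof (induction p)
  case 0 then show ?case by (intro exI[of _ 0]) auto
next
  case (Suc p)
  then obtain t tl0 where t: "t \<le> p * (2 * length (cands_tape True bs @ [4] @ c))" "tl0 \<in> {[],[0]}"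
    "run t (cfg_last 13 (cands_tape True bs @ [4] @ c) [])
       = cfg_last 13 (cands_tape True (cands_after c bs p) @ [4] @ take (length c - p) c @ marked (drop (length c - p) c)) tl0"
    by auto
  define b where "b = c ! (length c - Suc p)"
  define uc' where "uc' = take (length c - Suc p) c"
  define mc where "mc = drop (length c - p) c"
  have pl: "p < length c" using Suc.prems by simp
  have tk: "take (length c - p) c = uc' @ [b]"
  proof -
    have "length c - p = Suc (length c - Suc p)" using pl by simp
    then show ?thesis unfolding uc'_def b_def using pl by (simp add: take_Suc_conv_app_nth)
  qed
  have dr: "drop (length c - Suc p) c = b # mc" using pl by (simp add: drop_diff_Suc b_def mc_def)
  have bin: "b \<in> {1,2,3}"
  proof -
    have "length c - Suc p < length c" using pl by simp
    then have "b \<in> set c" unfolding b_def by (rule nth_mem)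
    then show ?thesis using c by auto
  qed
  have ucs: "set uc' \<subseteq> {1,2,3}" using c by (auto simp: uc'_def dest: in_set_takeD)
  have mcs: "set mc \<subseteq> {1,2,3}" using c by (auto simp: mc_def dest: in_set_dropD)
  have okP: "\<forall>x\<in>set (cands_after c bs p). cand_ok x"
    using cand_inv_after[of p c bs] bs pl by (auto simp: cand_inv_def split: prod.splits)
  have neP: "cands_after c bs p \<noteq> []" using bs by (simp add: cands_after_ne)
  obtain t2 where t2: "t2 \<le> 2 * length (cands_tape True (cands_after c bs p) @ [4] @ uc' @ [b] @ marked mc)"
    "run t2 (cfg_last 13 (cands_tape True (cands_after c bs p) @ [4] @ uc' @ [b] @ marked mc) tl0)
      = cfg_last 13 (cands_tape True (map (cand_step b) (cands_after c bs p)) @ [4] @ uc' @ marked (b # mc)) [0]"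
    using run_compare_bit[OF neP okP bin ucs mcs t(2)] by blast
  have len: "length (cands_tape True (cands_after c bs p) @ [4] @ uc' @ [b] @ marked mc)
      = length (cands_tape True bs @ [4] @ c)"
  proof -
    have "length (uc' @ [b] @ mc) = length c" using pl by (simp add: uc'_def mc_def)
    then show ?thesis by (simp add: length_cands_after)
  qed
  have "run (t2 + t) (cfg_last 13 (cands_tape True bs @ [4] @ c) [])
     = cfg_last 13 (cands_tape True (cands_after c bs (Suc p)) @ [4] @ take (length c - Suc p) c @ marked (drop (length c - Suc p) c)) [0]"
    using t(3) t2(2) tk dr by (simp add: run_add uc'_def b_def mc_def)
  moreover have "t2 + t \<le> Suc p * (2 * length (cands_tape True bs @ [4] @ c))"
    using t(1) t2(1) len by simp
  ultimately show ?case by blast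
qed


lemma fst_step_cfg_last:
  "q \<notin> {1,2,3} \<Longrightarrow> fst (tm_step member_tm (cfg_last q (A @ [h]) X)) = fst (member_tm q h)"
  by (simp add: cfg_last_snoc tm_step_def split: prod.split dir.split list.split)

lemma run_final_scan:
  assumes u: "set u \<subseteq> {1,2,3}" and mm: "set mm \<subseteq> {1,2,3}"
  shows "run (length u + length mm) (cfg_last 27 (A @ [z] @ u @ marked mm) R)
    = cfg_last (if u = [] then 27 else 28) (A @ [z]) (u @ marked mm @ R)"
proof -
  have sweep: "run (length (marked mm)) (cfg_last 27 ((A @ [z] @ u) @ marked mm) R)
      = cfg_last 27 (A @ [z] @ u) (marked mm @ R)"
    by (rule run_left_sweep) (use mm in \<open>auto simp: member_tm_final\<close>)
  show ?thesis
  proof (cases u rule: rev_cases)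
    case Nil
    then show ?thesis using sweep by simp
  next
    case (snoc u' t)
    have t: "t \<in> {1,2,3}" and u': "set u' \<subseteq> {1,2,3}" using u snoc by auto
    have "tm_step member_tm (cfg_last 27 ((A @ [z] @ u') @ [t]) X) = cfg_last 28 (A @ [z] @ u') (t # X)" for X
      by (rule step_cfg_last_left) (use t in \<open>auto simp: member_tm_final\<close>)
    moreover have "run (length u') (cfg_last 28 ((A @ [z]) @ u') X) = cfg_last 28 (A @ [z]) (u' @ X)" for X
      by (rule run_left_sweep) (use u' in \<open>auto simp: member_tm_final_skip\<close>)
    moreover have "length u + length mm = length u' + (1 + length (marked mm))" using snoc by simp
    then have "run (length u + length mm) (cfg_last 27 (A @ [z] @ u @ marked mm) R)
        = run (length u') (tm_step member_tm
            (run (length (marked mm)) (cfg_last 27 ((A @ [z] @ u) @ marked mm) R)))"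
      by (simp only: run_add run_one append_assoc)
    ultimately show ?thesis using sweep snoc by simp
  qed
qed

lemma run_final_block:
  assumes u: "set u \<subseteq> {1,2,3}" and mm: "set mm \<subseteq> {1,2,3}"
    and z: "z \<in> {4,8,9,10}" and A: "z \<in> {4,8} \<Longrightarrow> A \<noteq> []"
  shows "(u = [] \<and> z \<in> {4,9} \<longrightarrow> (\<exists>t \<le> length u + length mm + 1.
            fst (run t (cfg_last 27 (A @ [z] @ u @ marked mm) R)) = 1))
       \<and> (\<not>(u = [] \<and> z \<in> {4,9}) \<and> z \<in> {9,10} \<longrightarrow> (\<exists>t \<le> length u + length mm + 1.
            fst (run t (cfg_last 27 (A @ [z] @ u @ marked mm) R)) = 3))
       \<and> (\<not>(u = [] \<and> z \<in> {4,9}) \<and> z \<in> {4,8} \<longrightarrow> (\<exists>X.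
            run (length u + length mm + 1) (cfg_last 27 (A @ [z] @ u @ marked mm) R) = cfg_last 27 A X))"
proof -
  define q where "q = (if u = [] then 27 else 28 :: nat)"
  have "length u + length mm + 1 = 1 + (length u + length mm)" by simp
  then have e: "run (length u + length mm + 1) (cfg_last 27 (A @ [z] @ u @ marked mm) R)
      = tm_step member_tm (cfg_last q (A @ [z]) (u @ marked mm @ R))"
    unfolding q_def by (simp only: run_add[of 1 "length u + length mm"] run_one run_final_scan[OF u mm])
  have q: "q \<notin> {1,2,3}" by (simp add: q_def)
  show ?thesis
  proof (intro conjI impI)
    assume "u = [] \<and> z \<in> {4,9}"
    then have "fst (member_tm q z) = 1" by (auto simp: q_def member_tm_final)
    then show "\<exists>t \<le> length u + length mm + 1. fst (run t (cfg_last 27 (A @ [z] @ u @ marked mm) R))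
        = 1"
      using e fst_step_cfg_last[OF q] by (intro exI[of _ "length u + length mm + 1"]) simp
  next
    assume "\<not>(u = [] \<and> z \<in> {4,9}) \<and> z \<in> {9,10}"
    then have "fst (member_tm q z) = 3" by (auto simp: q_def member_tm_final member_tm_final_skip)
    then show "\<exists>t \<le> length u + length mm + 1. fst (run t (cfg_last 27 (A @ [z] @ u @ marked mm) R))
        = 3"
      using e fst_step_cfg_last[OF q] by (intro exI[of _ "length u + length mm + 1"]) simp
  next
    assume a: "\<not>(u = [] \<and> z \<in> {4,9}) \<and> z \<in> {4,8}"
    then have "member_tm q z = (27, z, Lft)" by (auto simp: q_def member_tm_final member_tm_final_skip)
    then show "\<exists>X. run (length u + length mm + 1) (cfg_last 27 (A @ [z] @ u @ marked mm) R)
        = cfg_last 27 A X"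
      using e step_cfg_last_left[OF _ q A] a by auto
  qed
qed

lemma run_final:
  assumes "bs \<noteq> []" "\<forall>x\<in>set bs. cand_ok x"
  shows "\<exists>t \<le> length (cands_tape True bs). fst (run t (cfg_last 27 (cands_tape True bs) R)) = (if \<exists>x\<in>set bs. cand_matched x then 1 else 3)"
  using assms
proof (induction bs arbitrary: R rule: rev_induct)
  case Nil then show ?case by simp
next
  case (snoc x bs)
  obtain w k d where x: "x = (w,k,d)" by (cases x)
  have okx: "cand_ok (w,k,d)" using snoc.prems x by auto
  define u where "u = take (length w - k) w"
  define mm where "mm = drop (length w - k) w"
  define z where "z = boundary_sym (bs = []) d"
  have tape: "cands_tape True (bs @ [x]) = cands_tape True bs @ [z] @ u @ marked mm"
    and u: "set u \<subseteq> {1,2,3}" and mm: "set mm \<subseteq> {1,2,3}"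
    using cands_tape_snoc_split(1)[OF okx, of True bs] cands_tape_snoc_split(2,3)[OF okx] x
    by (simp_all add: u_def mm_def z_def)
  have len: "length (cands_tape True (bs @ [x])) = length (cands_tape True bs) + (length u + length mm + 1)"
    using tape by simp
  have zin: "z \<in> {4,8,9,10}" by (auto simp: z_def boundary_sym_def)
  have gx: "cand_matched x \<longleftrightarrow> (u = [] \<and> z \<in> {4,9})"
  proof -
    have "u = [] \<longleftrightarrow> k = length w" using okx by (auto simp: u_def cand_ok_def)
    moreover have "z \<in> {4,9} \<longleftrightarrow> \<not> d" by (auto simp: z_def boundary_sym_def)
    ultimately show ?thesis using x by (auto simp: cand_matched_def)
  qed
  have A: "z \<in> {4,8} \<Longrightarrow> cands_tape True bs \<noteq> []"
    using cands_tape_ne[of bs True] by (auto simp: z_def boundary_sym_def split: if_splits)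
  note fb = run_final_block[OF u mm zin A, of R]
  show ?case
  proof (cases "cand_matched x")
    case True
    then obtain t where "t \<le> length u + length mm + 1" "fst (run t (cfg_last 27 (cands_tape True bs @ [z] @ u @ marked mm) R)) = 1"
      using fb gx by auto
    then show ?thesis using True tape len by (intro exI[of _ t]) auto
  next
    case False
    show ?thesis
    proof (cases "bs = []")
      case True
      then have "z \<in> {9,10}" by (auto simp: z_def boundary_sym_def)
      then obtain t where "t \<le> length u + length mm + 1" "fst (run t (cfg_last 27 (cands_tape True bs @ [z] @ u @ marked mm) R)) = 3"
        using fb gx False by auto
      then show ?thesis using True False tape len by (intro exI[of _ t]) auto
    next
      case bsne: False
      then have "z \<in> {4,8}" by (auto simp: z_def boundary_sym_def)
      then obtain X where X: "run (length u + length mm + 1) (cfg_last 27 (cands_tape True bs @ [z] @ u @ marked mm) R) = cfg_last 27 (cands_tape True bs) X"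
        using fb gx False by auto
      obtain t where t: "t \<le> length (cands_tape True bs)" "fst (run t (cfg_last 27 (cands_tape True bs) X)) = (if \<exists>x\<in>set bs. cand_matched x then 1 else 3)"
        using snoc.IH[of X] snoc.prems bsne by auto
      have "run (t + (length u + length mm + 1)) (cfg_last 27 (cands_tape True (bs @ [x])) R)
          = run t (cfg_last 27 (cands_tape True bs) X)"
        using X tape by (simp only: run_add)
      then show ?thesis using t False len by (intro exI[of _ "t + (length u + length mm + 1)"]) auto
    qed
  qed
qed

lemma run_finish:
  assumes bs: "bs \<noteq> []" "\<forall>x\<in>set bs. cand_ok x" and c: "set c \<subseteq> {1,2,3}"
  shows "\<exists>t \<le> length c + 1 + length (cands_tape True bs).
    fst (run t (cfg_last 13 (cands_tape True bs @ [4] @ marked c) R))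
      = (if \<exists>x\<in>set bs. cand_matched x then 1 else 3)"
proof -
  define W where "W = cands_tape True bs"
  have "W \<noteq> []" using bs by (simp add: W_def cands_tape_ne)
  have sweep: "run (length (marked c)) (cfg_last 13 ((W @ [4]) @ marked c) R)
      = cfg_last 13 (W @ [4]) (marked c @ R)"
    by (rule run_left_sweep) (use c in \<open>auto simp: member_tm_pick\<close>)
  have turn: "tm_step member_tm (cfg_last 13 (W @ [4]) X) = cfg_last 27 W (4 # X)" for X
    by (rule step_cfg_last_left) (use \<open>W \<noteq> []\<close> in \<open>auto simp: member_tm_pick\<close>)
  obtain t where t: "t \<le> length W"
    "fst (run t (cfg_last 27 W (4 # marked c @ R))) = (if \<exists>x\<in>set bs. cand_matched x then 1 else 3)"
    using run_final[OF bs] unfolding W_def by blast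
  have "run (t + (1 + length (marked c))) (cfg_last 13 (W @ [4] @ marked c) R)
      = run t (tm_step member_tm (run (length (marked c)) (cfg_last 13 ((W @ [4]) @ marked c) R)))"
    by (simp only: run_add run_one append_assoc)
  also have "\<dots> = run t (cfg_last 27 W (4 # marked c @ R))" by (simp only: sweep turn)
  finally have "fst (run (t + (1 + length c)) (cfg_last 13 (W @ [4] @ marked c) R))
      = (if \<exists>x\<in>set bs. cand_matched x then 1 else 3)"
    using t(2) by (simp only: length_map)
  moreover have "t + (1 + length c) \<le> length c + 1 + length W" using t(1) by simp
  ultimately show ?thesis unfolding W_def by blast
qed

lemma run_start_candidates:
  assumes ws: "ws \<noteq> []" "\<forall>w\<in>set ws. w \<noteq> [] \<and> set w \<subseteq> {1,2,3}" and c: "set c \<subseteq> {1,2,3}"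
  defines "x \<equiv> join [4] (ws @ [c])" and "bs \<equiv> map (\<lambda>w. (w, 0::nat, False)) ws"
  shows "9 # x = cands_tape True bs @ [4] @ c"
    and "run (length x + 1) (0, [], x) = cfg_last 13 (cands_tape True bs @ [4] @ c) []"
proof -
  have xJ: "x = join [4] ws @ [4] @ c" using ws by (simp add: x_def join_snoc)
  then show tape: "9 # x = cands_tape True bs @ [4] @ c"
    using cands_tape_init[OF ws(1), of True] by (simp add: bs_def boundary_sym_def)
  obtain w1 ws' where ws1: "ws = w1 # ws'" using ws by (cases ws) auto
  obtain x0 w1' where w1: "w1 = x0 # w1'" "x0 \<in> {1,2,3}" using ws ws1 by (cases w1) auto
  have J: "join [4] ws = w1 @ (if ws' = [] then [] else [4] @ join [4] ws')"
    unfolding ws1 by (cases ws') auto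
  obtain xs where x: "x = x0 # xs" using xJ J w1 by auto
  have "set (join [4] ws) \<subseteq> {1,2,3,4}" using set_join[of "[4]" ws] ws by fastforce
  then have xs: "set xs \<subseteq> {1,2,3,4}" "4 \<in> set xs"
    using x xJ c J w1 by auto
  show "run (length x + 1) (0, [], x) = cfg_last 13 (cands_tape True bs @ [4] @ c) []"
    using run_start[OF w1(2) xs(1)] xs(2) x tape by simp
qed

text \<open>Running time: shifting takes |x| + 1 steps, each of the |c| comparison passes at most
  2 (|x| + 1), the final sweep at most |c| + 1 + |x| + 1, altogether at most 5 (|x| + 1)^2.\<close>

lemma member_tm_decides_membership:
  assumes ws: "ws \<noteq> []" "\<forall>w\<in>set ws. w \<noteq> [] \<and> set w \<subseteq> {1,2,3}"
    and c: "set c \<subseteq> {1,2,3}"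
  defines "x \<equiv> join [4] (ws @ [c])"
  shows "\<exists>t \<le> 5 * (length x + 1)^2. fst (run t (0, [], x)) = (if c \<in> set ws then 1 else 3)"
proof -
  define bs where "bs = map (\<lambda>w. (w, 0::nat, False)) ws"
  have tape: "9 # x = cands_tape True bs @ [4] @ c"
    unfolding x_def bs_def by (rule run_start_candidates(1)[OF ws c])
  have start: "run (length x + 1) (0, [], x) = cfg_last 13 (cands_tape True bs @ [4] @ c) []"
    unfolding x_def bs_def by (rule run_start_candidates(2)[OF ws c])
  have bs_ne: "bs \<noteq> []" using ws by (simp add: bs_def)
  have inv0: "\<forall>y\<in>set bs. cand_inv c 0 y" using ws by (auto simp: bs_def cand_inv_def cand_ok_def)
  have inv: "\<forall>y\<in>set (cands_after c bs (length c)). cand_inv c (length c) y"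
    using cand_inv_after[OF le_refl inv0] .
  have "length (9 # x) = length (cands_tape True bs @ [4] @ c)" by (simp only: tape)
  then have len: "length (cands_tape True bs @ [4] @ c) = length x + 1" by simp
  obtain t2 tl0 where t2: "t2 \<le> length c * (2 * (length x + 1))"
    "run t2 (cfg_last 13 (cands_tape True bs @ [4] @ c) [])
      = cfg_last 13 (cands_tape True (cands_after c bs (length c)) @ [4] @ marked c) tl0"
    using run_compare_bits[OF bs_ne inv0 c le_refl] unfolding len by auto
  have ok: "\<forall>y\<in>set (cands_after c bs (length c)). cand_ok y"
    using inv by (auto simp: cand_inv_def split: prod.splits)
  obtain t3 where t3: "t3 \<le> length c + 1 + length (cands_tape True (cands_after c bs (length c)))"
    "fst (run t3 (cfg_last 13 (cands_tape True (cands_after c bs (length c)) @ [4] @ marked c) tl0))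
      = (if \<exists>y\<in>set (cands_after c bs (length c)). cand_matched y then 1 else 3)"
    using run_finish[OF cands_after_ne[OF bs_ne] ok c, of tl0] by blast
  have W_len: "length (cands_tape True (cands_after c bs (length c))) \<le> length x + 1"
    using len by (simp add: length_cands_after)
  have "(\<exists>y\<in>set (cands_after c bs (length c)). cand_matched y) \<longleftrightarrow> c \<in> set ws"
  proof -
    have "(\<exists>y\<in>set (cands_after c bs (length c)). cand_matched y)
        \<longleftrightarrow> c \<in> set (map fst (cands_after c bs (length c)))"
      using inv cand_inv_final by force
    then show ?thesis by (simp add: map_fst_cands_after bs_def comp_def)
  qed
  moreover have "run (t3 + (t2 + (length x + 1))) (0, [], x)
      = run t3 (cfg_last 13 (cands_tape True (cands_after c bs (length c)) @ [4] @ marked c) tl0)"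
    by (simp only: run_add[of t3 "t2 + (length x + 1)"] run_add[of t2 "length x + 1"] start t2(2))
  moreover have "t3 + (t2 + (length x + 1)) \<le> 5 * (length x + 1)^2"
  proof -
    define L where "L = length x + 1"
    have "length c \<le> length x" using len by simp
    then have "t2 \<le> 2 * (L * L)" and "t3 \<le> 2 * L"
      using t2(1) t3(1) W_len mult_right_mono[of "length c" L "2 * L"] by (auto simp: L_def)
    moreover have "L \<le> L * L" by (simp add: L_def)
    ultimately show ?thesis unfolding L_def[symmetric] power2_eq_square by linarith
  qed
  ultimately show ?thesis using t3(2) by (intro exI[of _ "t3 + (t2 + (length x + 1))"]) auto
qed

lemma member_tm_single_matrix:
  assumes c: "c \<noteq> []" "set c \<subseteq> {1,2,3}"
  shows "fst (run (length c + 1) (0, [], c)) = 3"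
proof -
  obtain x0 xs where c0: "c = x0 # xs" using c by (cases c) auto
  have x0: "x0 \<in> {1,2,3}" and xs: "set xs \<subseteq> {1,2,3,4}" "4 \<notin> set xs" using c c0 by auto
  show ?thesis using run_start[OF x0 xs(1)] xs(2) c0 by (simp add: cfg_last_def)
qed

lemma member_tm_on_instance:
  assumes k: "k \<ge> 1" and I: "I \<in> Uall k"
  shows "tm_state_after member_tm (5 * (size2_inst k I + 1)^2) (encode_inst I)
    = (if I \<in> listed k then 1 else 3)"
proof -
  obtain Ws C where I_eq: "I = (Ws, C)" by (cases I)
  have v: "\<forall>W\<in>set Ws. valid_mat k W" "valid_mat k C" using I I_eq by (auto simp: Uall_def)
  let ?ws = "map encode_mat Ws" and ?c = "encode_mat C"
  let ?x = "join [4] (?ws @ [?c])"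
  have ws: "\<forall>w\<in>set ?ws. w \<noteq> [] \<and> set w \<subseteq> {1,2,3}"
  proof
    fix w assume "w \<in> set ?ws"
    then obtain W where "W \<in> set Ws" "w = encode_mat W" by auto
    then show "w \<noteq> [] \<and> set w \<subseteq> {1,2,3}"
      using v k encode_mat_ne[of k W] set_encode_mat[of k W] by auto
  qed
  have c: "?c \<noteq> []" "set ?c \<subseteq> {1,2,3}"
    using v k encode_mat_ne[of k C] set_encode_mat[of k C] by auto
  have "?c \<in> set ?ws \<longleftrightarrow> C \<in> set Ws"
    using encode_mat_inj[of k _ C] v by (auto simp: image_iff)
  then have listed: "I \<in> listed k \<longleftrightarrow> ?c \<in> set ?ws"
    using I by (simp add: listed_def I_eq)
  have len: "length ?x = size2_inst k I"
    using length_encode_inst[OF k, of Ws C] I I_eq by (simp add: encode_inst_Pair)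
  have "\<exists>t \<le> 5 * (length ?x + 1)^2. fst (run t (0, [], ?x)) = (if I \<in> listed k then 1 else 3)"
  proof (cases "Ws = []")
    case True
    then have x: "?x = ?c" and "I \<notin> listed k" by (simp_all add: listed)
    then have "fst (run (length ?c + 1) (0, [], ?x)) = (if I \<in> listed k then 1 else 3)"
      using member_tm_single_matrix[OF c] by (simp only: if_False)
    moreover have "length ?c + 1 \<le> 5 * (length ?x + 1)^2" unfolding x by (simp add: power2_eq_square)
    ultimately show ?thesis by blast
  next
    case False
    then show ?thesis using member_tm_decides_membership[OF _ ws c(2)] listed by simp
  qed
  then obtain t where t: "t \<le> 5 * (size2_inst k I + 1)^2"
    "fst (run t (0, [], ?x)) = (if I \<in> listed k then 1 else 3)"
    unfolding len by blast
  then have "run (5 * (size2_inst k I + 1)^2) (0, [], ?x) = run t (0, [], ?x)"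
    by (intro run_halted_mono) auto
  moreover have "encode_inst I = ?x" by (simp add: I_eq encode_inst_Pair)
  ultimately show ?thesis using t(2) unfolding tm_state_after_def by (simp only:)
qed

section \<open>Counting weighted lists\<close>

definition level :: "'a set \<Rightarrow> ('a \<Rightarrow> nat) \<Rightarrow> nat \<Rightarrow> 'a set" where
  "level S \<omega> j = {x\<in>S. \<omega> x = j}"

definition weighted_lists :: "'a set \<Rightarrow> ('a \<Rightarrow> nat) \<Rightarrow> nat \<Rightarrow> 'a list set" where
  "weighted_lists S \<omega> t = {xs. set xs \<subseteq> S \<and> sum_list (map \<omega> xs) = t}"

definition weighted_lists_len :: "'a set \<Rightarrow> ('a \<Rightarrow> nat) \<Rightarrow> nat \<Rightarrow> nat \<Rightarrow> 'a list set" where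
  "weighted_lists_len S \<omega> n t = {xs. length xs = n \<and> set xs \<subseteq> S \<and> sum_list (map \<omega> xs) = t}"

definition cons_lists :: "'a set \<Rightarrow> ('a \<Rightarrow> nat) \<Rightarrow> (nat \<Rightarrow> 'a list set) \<Rightarrow> nat \<Rightarrow> 'a list set" where
  "cons_lists S \<omega> F t = (\<lambda>(x, xs). x # xs) ` (SIGMA x:{x\<in>S. \<omega> x \<le> t}. F (t - \<omega> x))"

lemma finite_weight_le:
  assumes "\<And>i. finite (level S \<omega> i)"
  shows "finite {x\<in>S. \<omega> x \<le> t}"
proof -
  have "{x\<in>S. \<omega> x \<le> t} = (\<Union>i\<le>t. level S \<omega> i)" by (auto simp: level_def)
  then show ?thesis using assms by simp
qed

lemma finite_cons_lists:
  "(\<And>i. finite (level S \<omega> i)) \<Longrightarrow> (\<And>i. finite (F i)) \<Longrightarrow> finite (cons_lists S \<omega> F t)"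
  unfolding cons_lists_def by (intro finite_imageI finite_SigmaI finite_weight_le)

lemma card_cons_lists:
  assumes f: "\<And>i. finite (level S \<omega> i)" and F: "\<And>i. finite (F i)"
  shows "card (cons_lists S \<omega> F t) = (\<Sum>i\<le>t. card (level S \<omega> i) * card (F (t - i)))"
proof -
  have inj: "inj_on (\<lambda>(x, xs). x # xs) (SIGMA x:{x\<in>S. \<omega> x \<le> t}. F (t - \<omega> x))"
    by (auto simp: inj_on_def)
  have "card (cons_lists S \<omega> F t) = card (SIGMA x:{x\<in>S. \<omega> x \<le> t}. F (t - \<omega> x))"
    unfolding cons_lists_def by (rule card_image[OF inj])
  also have "\<dots> = (\<Sum>x\<in>{x\<in>S. \<omega> x \<le> t}. card (F (t - \<omega> x)))"
    using finite_weight_le[OF f] F by (simp add: card_SigmaI)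
  also have "{x\<in>S. \<omega> x \<le> t} = (\<Union>i\<le>t. level S \<omega> i)" by (auto simp: level_def)
  also have "(\<Sum>x\<in>(\<Union>i\<le>t. level S \<omega> i). card (F (t - \<omega> x)))
      = (\<Sum>i\<le>t. \<Sum>x\<in>level S \<omega> i. card (F (t - \<omega> x)))"
    by (rule sum.UNION_disjoint) (use f in \<open>auto simp: level_def\<close>)
  also have "\<dots> = (\<Sum>i\<le>t. card (level S \<omega> i) * card (F (t - i)))"
    by (rule sum.cong) (auto simp: level_def)
  finally show ?thesis .
qed

lemma weighted_lists_len_Suc:
  "weighted_lists_len S \<omega> (Suc n) t = cons_lists S \<omega> (weighted_lists_len S \<omega> n) t"
proof (rule set_eqI)
  fix ys
  show "ys \<in> weighted_lists_len S \<omega> (Suc n) t \<longleftrightarrow> ys \<in> cons_lists S \<omega> (weighted_lists_len S \<omega> n) t"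
  proof
    assume "ys \<in> weighted_lists_len S \<omega> (Suc n) t"
    then obtain x xs where "ys = x # xs" "length xs = n" "x \<in> S" "set xs \<subseteq> S"
        "\<omega> x + sum_list (map \<omega> xs) = t"
      unfolding weighted_lists_len_def by (cases ys) auto
    then show "ys \<in> cons_lists S \<omega> (weighted_lists_len S \<omega> n) t"
      unfolding cons_lists_def weighted_lists_len_def by (auto intro!: image_eqI[of _ _ "(x, xs)"])
  qed (auto simp: cons_lists_def weighted_lists_len_def)
qed

lemma weighted_lists_len_0: "weighted_lists_len S \<omega> 0 t = (if t = 0 then {[]} else {})"
  by (auto simp: weighted_lists_len_def)

lemma finite_weighted_lists_len:
  "(\<And>i. finite (level S \<omega> i)) \<Longrightarrow> finite (weighted_lists_len S \<omega> n t)"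
  by (induction n arbitrary: t) (simp_all add: weighted_lists_len_0 weighted_lists_len_Suc finite_cons_lists)

lemma weighted_lists_len_gf:
  fixes y G :: real
  assumes f: "\<And>i. finite (level S \<omega> i)" and y: "y \<ge> 0"
    and G: "(\<lambda>j. real (card (level S \<omega> j)) * y ^ j) sums G"
  shows "(\<lambda>j. real (card (weighted_lists_len S \<omega> n j)) * y ^ j) sums (G ^ n)"
proof (induction n)
  case 0
  have "(\<lambda>j. real (card (weighted_lists_len S \<omega> 0 j)) * y ^ j)
      = (\<lambda>j. if j = 0 then 1 else 0)"
    by (auto simp: weighted_lists_len_0)
  then show ?case using sums_single[of 0 "\<lambda>_. 1::real"] by simp
next
  case (Suc n)
  let ?a = "\<lambda>j. real (card (level S \<omega> j)) * y ^ j"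
  let ?b = "\<lambda>j. real (card (weighted_lists_len S \<omega> n j)) * y ^ j"
  have "summable (\<lambda>j. norm (?a j))" using G y by (simp add: sums_iff)
  moreover have "summable (\<lambda>j. norm (?b j))" using Suc y by (simp add: sums_iff)
  ultimately have "(\<lambda>j. \<Sum>i\<le>j. ?a i * ?b (j - i)) sums (suminf ?a * suminf ?b)"
    by (rule Cauchy_product_sums)
  moreover have "suminf ?a * suminf ?b = G ^ Suc n" using G Suc by (simp add: sums_iff)
  moreover have "(\<Sum>i\<le>j. ?a i * ?b (j - i))
      = real (card (weighted_lists_len S \<omega> (Suc n) j)) * y ^ j"
    for j
  proof -
    have "(\<Sum>i\<le>j. ?a i * ?b (j - i))
        = (\<Sum>i\<le>j. real (card (level S \<omega> i) * card (weighted_lists_len S \<omega> n (j - i))) * y ^ j)"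
      by (rule sum.cong) (auto simp: power_add[symmetric])
    also have "\<dots> = real (card (weighted_lists_len S \<omega> (Suc n) j)) * y ^ j"
      by (simp add: weighted_lists_len_Suc card_cons_lists f finite_weighted_lists_len sum_distrib_right)
    finally show ?thesis .
  qed
  ultimately show ?case by simp
qed

lemma weighted_lists_eq_cons_lists:
  assumes "t \<ge> 1"
  shows "weighted_lists S \<omega> t = cons_lists S \<omega> (weighted_lists S \<omega>) t"
proof (rule set_eqI)
  fix ys
  show "ys \<in> weighted_lists S \<omega> t \<longleftrightarrow> ys \<in> cons_lists S \<omega> (weighted_lists S \<omega>) t"
  proof
    assume ys: "ys \<in> weighted_lists S \<omega> t"
    then have "ys \<noteq> []" using assms by (auto simp: weighted_lists_def)
    then obtain x xs where "ys = x # xs" "x \<in> S" "set xs \<subseteq> S" "\<omega> x + sum_list (map \<omega> xs) = t"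
      using ys unfolding weighted_lists_def by (cases ys) auto
    then show "ys \<in> cons_lists S \<omega> (weighted_lists S \<omega>) t"
      unfolding cons_lists_def weighted_lists_def by (auto intro!: image_eqI[of _ _ "(x, xs)"])
  qed (auto simp: cons_lists_def weighted_lists_def)
qed

lemma weighted_lists_0:
  assumes "\<And>x. x \<in> S \<Longrightarrow> \<omega> x \<ge> 1"
  shows "weighted_lists S \<omega> 0 = {[]}"
proof -
  have "xs = []" if "set xs \<subseteq> S" "sum_list (map \<omega> xs) = 0" for xs
    using that assms by (cases xs) fastforce+
  then show ?thesis by (auto simp: weighted_lists_def)
qed

lemma finite_weighted_lists:
  assumes p: "\<And>x. x \<in> S \<Longrightarrow> \<omega> x \<ge> 1" and f: "\<And>i. finite (level S \<omega> i)"
  shows "finite (weighted_lists S \<omega> t)"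
proof (rule finite_subset)
  show "weighted_lists S \<omega> t \<subseteq> {xs. set xs \<subseteq> {x\<in>S. \<omega> x \<le> t} \<and> length xs \<le> t}"
  proof
    fix xs assume xs: "xs \<in> weighted_lists S \<omega> t"
    have "\<omega> x \<le> t" if "x \<in> set xs" for x
      using xs that member_le_sum_list[of "\<omega> x" "map \<omega> xs"] by (auto simp: weighted_lists_def)
    moreover have "length xs \<le> sum_list (map \<omega> xs)"
      using sum_list_mono[of xs "\<lambda>_. 1::nat" \<omega>] xs p
        by (auto simp: weighted_lists_def sum_list_triv)
    ultimately show "xs \<in> {xs. set xs \<subseteq> {x\<in>S. \<omega> x \<le> t} \<and> length xs \<le> t}"
      using xs by (auto simp: weighted_lists_def)
  qed
  show "finite {xs. set xs \<subseteq> {x\<in>S. \<omega> x \<le> t} \<and> length xs \<le> t}"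
    by (rule finite_lists_length_le) (rule finite_weight_le[OF f])
qed

lemma card_weighted_lists:
  assumes p: "\<And>x. x \<in> S \<Longrightarrow> \<omega> x \<ge> 1" and f: "\<And>i. finite (level S \<omega> i)" and t: "t \<ge> 1"
  shows "card (weighted_lists S \<omega> t) = (\<Sum>i\<le>t. card (level S \<omega> i) * card (weighted_lists S \<omega> (t - i)))"
  unfolding weighted_lists_eq_cons_lists[OF t]
  by (rule card_cons_lists[OF f finite_weighted_lists[OF p f]])

text \<open>Each entry carries one extra unit of weight for the separator following it, so an instance
  of size m is a list of matrices of total weight m + 1.\<close>

definition entry_weight :: "nat \<Rightarrow> nat" where
  "entry_weight a = size2 a + 1"

definition rows :: "nat \<Rightarrow> nat list set" where
  "rows k = {r. length r = k \<and> set r \<subseteq> {0<..}}"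

definition row_weight :: "nat list \<Rightarrow> nat" where
  "row_weight r = sum_list (map entry_weight r)"

definition mats :: "nat \<Rightarrow> mat set" where
  "mats k = {M. valid_mat k M}"

definition mat_weight :: "mat \<Rightarrow> nat" where
  "mat_weight M = sum_list (map row_weight M)"

lemma level_entry_weight: "level {0<..} entry_weight w = {a. a \<ge> 1 \<and> size2 a = w - 1}"
proof -
  have "size2 a + 1 = w \<longleftrightarrow> size2 a = w - 1" for a using size2_ge1[of a] by linarith
  then show ?thesis by (auto simp: level_def entry_weight_def)
qed
lemma card_entry_level: "card (level {0<..} entry_weight w) = (if w \<ge> 2 then 2 ^ (w - 2) else 0)"
  unfolding level_entry_weight using card_size2_eq[of "w - 1"] by auto
lemma finite_entry_level: "finite (level {0<..} entry_weight w)"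
proof (rule finite_subset)
  show "level {0<..} entry_weight w \<subseteq> {..<2 ^ w}"
  proof
    fix a assume "a \<in> level {0<..} entry_weight w"
    then have "a \<ge> 1" "size2 a + 1 = w" by (auto simp: level_def entry_weight_def)
    then have "a < 2 ^ size2 a" "(2::nat) ^ size2 a \<le> 2 ^ w"
      using size2_bounds[of a] by (auto intro: power_increasing)
    then show "a \<in> {..<2 ^ w}" by (simp only: lessThan_iff less_le_trans)
  qed
qed simp
lemma entry_gf:
  fixes y :: real
  assumes y: "0 \<le> y" "y < 1/2"
  shows "(\<lambda>w. real (card (level {0<..} entry_weight w)) * y ^ w) sums (y^2 / (1 - 2*y))"
proof -
  define f where "f = (\<lambda>w. real (card (level {0<..} entry_weight w)) * y ^ w)"
  have "f (Suc (Suc n)) = y^2 * (2*y)^n" for n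
    by (simp add: f_def card_entry_level power_mult_distrib power2_eq_square)
  moreover have "(\<lambda>n. y^2 * (2*y)^n) sums (y^2 / (1 - 2*y))"
    using sums_mult[OF geometric_sums[of "2*y"], of "y^2"] y by simp
  ultimately have "(\<lambda>n. f (Suc (Suc n))) sums (y^2 / (1 - 2*y))" by simp
  then have "(\<lambda>n. f (Suc n)) sums (y^2 / (1 - 2*y) + f 1)"
    using sums_Suc[of "\<lambda>n. f (Suc n)"] by simp
  then have "f sums (y^2 / (1 - 2*y) + f 1 + f 0)" by (rule sums_Suc)
  moreover have "f 0 = 0" "f 1 = 0" by (simp_all add: f_def card_entry_level)
  ultimately have "f sums (y^2 / (1 - 2*y))" by simp
  then show ?thesis by (simp add: f_def)
qed

lemma row_level_eq: "level (rows k) row_weight t = weighted_lists_len {0<..} entry_weight k t"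
  by (auto simp: level_def rows_def row_weight_def weighted_lists_len_def)

lemma mat_level_eq: "level (mats k) mat_weight t = weighted_lists_len (rows k) row_weight k t"
  by (auto simp: level_def rows_def row_weight_def weighted_lists_len_def mats_def mat_weight_def
      valid_mat_def Suc_le_eq)

lemma finite_row_level: "finite (level (rows k) row_weight t)"
  unfolding row_level_eq by (rule finite_weighted_lists_len) (rule finite_entry_level)

lemma finite_mat_level: "finite (level (mats k) mat_weight t)"
  unfolding mat_level_eq by (rule finite_weighted_lists_len) (rule finite_row_level)

lemma mat_gf:
  fixes y :: real
  assumes y: "0 \<le> y" "y < 1/2"
  shows "(\<lambda>j. real (card (level (mats k) mat_weight j)) * y ^ j) sums ((y^2 / (1 - 2*y)) ^ (k * k))"
proof -
  have "(\<lambda>j. real (card (level (rows k) row_weight j)) * y ^ j) sums ((y^2 / (1 - 2*y)) ^ k)"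
    unfolding row_level_eq
    by (rule weighted_lists_len_gf[OF finite_entry_level y(1) entry_gf[OF y]])
  then have "(\<lambda>j. real (card (level (mats k) mat_weight j)) * y ^ j) sums (((y^2 / (1 - 2*y)) ^ k) ^ k)"
    unfolding mat_level_eq by (rule weighted_lists_len_gf[OF finite_row_level y(1)])
  then show ?thesis by (simp add: power_mult)
qed

lemma mat_weight_size2:
  "valid_mat k M \<Longrightarrow> k \<ge> 1 \<Longrightarrow> mat_weight M = size2_mat k M + 1"
proof -
  assume v: "valid_mat k M" and k: "k \<ge> 1"
  have "mat_weight M = sum_list (map entry_weight (concat M))"
    by (simp add: mat_weight_def row_weight_def[abs_def] map_concat sum_list_concat comp_def)
  also have "\<dots> = sum_list (map size2 (concat M)) + k * k"
    using length_concat_valid_mat[OF v] by (simp add: entry_weight_def[abs_def] sum_list_Suc)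
  finally show ?thesis using v k by (simp add: size2_mat_def sum_entries_valid_mat power2_eq_square)
qed

lemma exists_mat_weight:
  assumes k: "k \<ge> 1" and t: "t \<ge> 2 * (k * k)"
  shows "\<exists>M\<in>mats k. mat_weight M = t"
proof -
  define s where "s = t + 1 - 2 * (k * k)"
  define a where "a = (2::nat) ^ (s - 1)"
  have sa: "size2 a = s" unfolding a_def using t by (intro size2_eqI) (auto simp: s_def)
  define M where "M = (a # replicate (k - 1) 1) # replicate (k - 1) (replicate k 1)"
  have "valid_mat k M" using k by (auto simp: M_def valid_mat_def a_def)
  moreover have "mat_weight M = (size2 a + 1) + (k - 1) * 2 + (k - 1) * (k * 2)"
    by (simp add: M_def mat_weight_def row_weight_def entry_weight_def size2_def sum_list_replicate)
  moreover have "(k - 1) * 2 + (k - 1) * (k * 2) + 2 = 2 * (k * k)"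
    using k by (cases k) (auto simp: algebra_simps)
  ultimately show ?thesis using sa t unfolding s_def mats_def by (intro bexI[of _ M]) auto
qed

section \<open>Renewal sequences\<close>

lemma sums_term_le: "f sums s \<Longrightarrow> (\<And>n. 0 \<le> f n) \<Longrightarrow> f j \<le> (s::real)"
  using sum_le_suminf[of f "{j}"] by (auto simp: sums_iff)

lemma sums_partial_le:
  "f sums s \<Longrightarrow> (\<And>n. 0 \<le> f n) \<Longrightarrow> (\<Sum>i\<le>n. f i) \<le> (s::real)"
  using sum_le_suminf[of f "{..n}"] by (auto simp: sums_iff)

lemma renewal_le_1:
  fixes w u :: "nat \<Rightarrow> real"
  assumes w0: "w 0 = 0" and wn: "\<And>j. 0 \<le> w j" and u0: "u 0 = 1"
    and ur: "\<And>t. t \<ge> 1 \<Longrightarrow> u t = (\<Sum>i\<le>t. w i * u (t - i))"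
    and S: "\<And>n. (\<Sum>i\<le>n. w i) \<le> 1"
  shows "0 \<le> u t \<and> u t \<le> 1"
proof (induction t rule: less_induct)
  case (less t)
  show ?case
  proof (cases "t = 0")
    case True then show ?thesis using u0 by simp
  next
    case False
    have b: "0 \<le> w i * u (t - i) \<and> w i * u (t - i) \<le> w i" if "i \<le> t" for i
    proof (cases "i = 0")
      case False
      then have "0 \<le> u (t - i) \<and> u (t - i) \<le> 1"
        using \<open>t \<noteq> 0\<close> that by (intro less.IH) simp
      then show ?thesis using wn[of i] by (simp add: mult_left_le)
    qed (simp add: w0)
    have "0 \<le> (\<Sum>i\<le>t. w i * u (t - i))" using b by (intro sum_nonneg) auto
    moreover have "(\<Sum>i\<le>t. w i * u (t - i)) \<le> (\<Sum>i\<le>t. w i)"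
      using b by (intro sum_mono) auto
    ultimately show ?thesis using ur[of t] S[of t] False by simp
  qed
qed

lemma renewal_partial_sums_le:
  fixes w u :: "nat \<Rightarrow> real"
  assumes w0: "w 0 = 0" and wn: "\<And>j. 0 \<le> w j" and u0: "u 0 = 1"
    and ur: "\<And>t. t \<ge> 1 \<Longrightarrow> u t = (\<Sum>i\<le>t. w i * u (t - i))"
    and un: "\<And>t. 0 \<le> u t" and S: "\<And>n. (\<Sum>i\<le>n. w i) \<le> S"
  shows "(\<Sum>t\<le>N. u t) \<le> 1 + S * (\<Sum>t\<le>N. u t)"
proof -
  have conv: "u t = (if t = 0 then 1 else 0) + (\<Sum>i\<le>t. w i * u (t - i))" for t
    using ur[of t] by (cases "t = 0") (simp_all add: u0 w0)
  have "(\<Sum>t\<le>N. u t) = 1 + (\<Sum>t\<le>N. \<Sum>i\<le>t. w i * u (t - i))"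
    by (subst conv) (simp add: sum.distrib)
  also have "(\<Sum>t\<le>N. \<Sum>i\<le>t. w i * u (t - i))
      = (\<Sum>(i, j)\<in>{(i, j). i + j \<le> N}. w i * u j)"
    by (rule sum.triangle_reindex_eq[symmetric])
  also have "\<dots> \<le> (\<Sum>(i, j)\<in>{..N} \<times> {..N}. w i * u j)"
    by (rule sum_mono2) (auto intro: mult_nonneg_nonneg wn un)
  also have "\<dots> = (\<Sum>i\<le>N. w i) * (\<Sum>j\<le>N. u j)"
    by (simp add: sum_product sum.cartesian_product)
  also have "\<dots> \<le> S * (\<Sum>j\<le>N. u j)"
    by (intro mult_right_mono S sum_nonneg un)
  finally show ?thesis by simp
qed

text \<open>A defective renewal sequence (total weight S < 1) is summable, with sum at most 1 / (1 - S).\<close>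

lemma renewal_tendsto_0:
  fixes w u :: "nat \<Rightarrow> real"
  assumes w0: "w 0 = 0" and wn: "\<And>j. 0 \<le> w j" and u0: "u 0 = 1"
    and ur: "\<And>t. t \<ge> 1 \<Longrightarrow> u t = (\<Sum>i\<le>t. w i * u (t - i))"
    and un: "\<And>t. 0 \<le> u t" and S: "\<And>n. (\<Sum>i\<le>n. w i) \<le> S" and S1: "S < 1"
  shows "u \<longlonglongrightarrow> 0"
proof (rule summable_LIMSEQ_zero, rule summableI_nonneg_bounded)
  fix N
  have "(\<Sum>t\<le>N. u t) \<le> 1 / (1 - S)"
    using renewal_partial_sums_le[OF w0 wn u0 ur un S, of N] S1 by (simp add: field_simps)
  moreover have "(\<Sum>t<N. u t) \<le> (\<Sum>t\<le>N. u t)"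
    by (rule sum_mono2) (auto intro: un)
  ultimately show "(\<Sum>t<N. u t) \<le> 1 / (1 - S)" by linarith
qed (rule un)

text \<open>Here e n is the weight beyond n; each step of the recursion loses at most the factor
  1 - e n.\<close>

lemma renewal_lower_bound_propagates:
  fixes w u e :: "nat \<Rightarrow> real"
  assumes w0: "w 0 = 0" and wn: "\<And>j. 0 \<le> w j"
    and e: "\<And>n. (\<Sum>i\<le>n. w i) = 1 - e n" "\<And>n. 0 \<le> e n"
    and ur: "\<And>t. t \<ge> 1 \<Longrightarrow> u t = (\<Sum>i\<le>t. w i * u (t - i))"
    and un: "\<And>t. 0 \<le> u t" and m0: "0 \<le> m0" and init: "\<And>n. n \<le> R \<Longrightarrow> m0 \<le> u (T + n)"
  shows "m0 * (1 - (\<Sum>j=Suc R..n. e j)) \<le> u (T + n)"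
proof (induction n rule: less_induct)
  case (less n)
  define P where "P n = (\<Sum>j=Suc R..n. e j)" for n
  have P_ge: "0 \<le> P m" for m using e(2) by (simp add: P_def sum_nonneg)
  show ?case
  proof (cases "n \<le> R")
    case True
    then show ?thesis using init[of n] by simp
  next
    case False
    have "(\<Sum>i\<in>{1..n}. w i) = 1 - e n"
      using e(1)[of n] w0 by (simp add: atMost_atLeast0 sum.atLeast_Suc_atMost)
    then have "m0 * (1 - P (n - 1)) * (1 - e n) = (\<Sum>i\<in>{1..n}. w i * (m0 * (1 - P (n - 1))))"
      by (simp only: sum_distrib_right[symmetric]) (simp add: algebra_simps)
    moreover have "m0 * (1 - P n) \<le> m0 * (1 - P (n - 1)) * (1 - e n)"
      using False m0 e(2)[of n] P_ge[of "n - 1"]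
      by (cases n) (auto simp: P_def sum.cl_ivl_Suc algebra_simps)
    moreover have "(\<Sum>i\<in>{1..n}. w i * (m0 * (1 - P (n - 1)))) \<le> (\<Sum>i\<in>{1..n}. w i * u (T + n - i))"
    proof (rule sum_mono)
      fix i assume i: "i \<in> {1..n}"
      have "P (n - i) \<le> P (n - 1)" using i e(2) unfolding P_def by (intro sum_mono2) auto
      then have "m0 * (1 - P (n - 1)) \<le> m0 * (1 - P (n - i))" using m0 by (simp add: mult_left_mono)
      also have "\<dots> \<le> u (T + (n - i))" unfolding P_def using i by (intro less.IH) auto
      finally show "w i * (m0 * (1 - P (n - 1))) \<le> w i * u (T + n - i)"
        using i wn by (simp add: mult_left_mono)
    qed
    moreover have "(\<Sum>i\<in>{1..n}. w i * u (T + n - i)) \<le> u (T + n)"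
      using ur[of "T + n"] False by (simp, intro sum_mono2) (auto intro: mult_nonneg_nonneg wn un)
    ultimately show ?thesis unfolding P_def by linarith
  qed
qed

lemma renewal_bounded_below:
  fixes w u :: "nat \<Rightarrow> real"
  assumes w0: "w 0 = 0" and wn: "\<And>j. 0 \<le> w j" and ws: "w sums 1"
    and ur: "\<And>t. t \<ge> 1 \<Longrightarrow> u t = (\<Sum>i\<le>t. w i * u (t - i))"
    and tails: "summable (\<lambda>n. 1 - (\<Sum>i\<le>n. w i))"
    and un: "\<And>t. 0 \<le> u t" and pos: "\<And>t. t \<ge> T \<Longrightarrow> 0 < u t"
  shows "\<exists>c>0. \<forall>t\<ge>T. c \<le> u t"
proof -
  define e where "e n = 1 - (\<Sum>i\<le>n. w i)" for n
  have e0: "0 \<le> e n" for n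
    using sums_partial_le[OF ws wn, of n] by (simp add: e_def)
  have "summable e" using tails by (simp add: e_def[abs_def])
  then obtain R where R: "\<And>m n. m \<ge> R \<Longrightarrow> norm (\<Sum>j=m..n. e j) < 1/2"
    using summable_partial_sum_bound[of e "1/2"] by auto
  define m0 where "m0 = Min (u ` {T..T+R})"
  have m0: "0 < m0" using pos by (auto simp: m0_def)
  have "m0 * (1 - (\<Sum>j=Suc R..n. e j)) \<le> u (T + n)" for n
    using m0 by (intro renewal_lower_bound_propagates[OF w0 wn _ e0 ur un]) (auto simp: e_def m0_def)
  moreover have "m0 * (1 / 2) \<le> m0 * (1 - (\<Sum>j=Suc R..n. e j))" for n
    using R[of "Suc R" n] e0 m0 by (intro mult_left_mono) (auto simp: sum_nonneg)
  ultimately have "m0 / 2 \<le> u t" if "T \<le> t" for t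
    using that by (metis (no_types, lifting) le_add_diff_inverse order_trans times_divide_eq_right mult_1_right)
  then show ?thesis using m0 by (intro exI[of _ "m0 / 2"]) auto
qed

lemma sums_tail_le:
  fixes w :: "nat \<Rightarrow> real"
  assumes ws: "w sums 1" and wb: "\<And>j. w j \<le> B * \<theta> ^ j" and th: "0 \<le> \<theta>" "\<theta> < 1"
  shows "1 - (\<Sum>i\<le>n. w i) \<le> B * \<theta> ^ Suc n / (1 - \<theta>)"
proof -
  have a: "(\<lambda>i. w (i + Suc n)) sums (1 - (\<Sum>i<Suc n. w i))"
    by (rule sums_split_initial_segment[OF ws])
  have "(\<lambda>i. \<theta> ^ i) sums (1 / (1 - \<theta>))" using th by (intro geometric_sums) auto
  then have b: "(\<lambda>i. (B * \<theta> ^ Suc n) * \<theta> ^ i) sums ((B * \<theta> ^ Suc n) * (1 / (1 - \<theta>)))"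
    by (rule sums_mult)
  have "1 - (\<Sum>i<Suc n. w i) \<le> (B * \<theta> ^ Suc n) * (1 / (1 - \<theta>))"
  proof (rule sums_le[OF _ a b])
    fix i
    have "w (i + Suc n) \<le> B * \<theta> ^ (i + Suc n)" by (rule wb)
    then show "w (i + Suc n) \<le> B * \<theta> ^ Suc n * \<theta> ^ i" by (simp add: power_add mult_ac)
  qed
  then show ?thesis by (simp add: lessThan_Suc_atMost)
qed

section \<open>Density of the recognised instances\<close>

definition y_crit :: real where
  "y_crit = sqrt 2 - 1"

text \<open>By entry_gf and mat_gf the weight generating function of k \<times> k matrices is
  (y^2 / (1 - 2 y))^(k^2); y_crit is the point where it equals 1.\<close>

lemma y_crit: "0 < y_crit" "y_crit < 9/20" "y_crit ^ 2 / (1 - 2 * y_crit) = 1"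
proof -
  have lo: "1.4 < sqrt (2::real)" by (rule real_less_rsqrt) (simp add: power2_eq_square)
  have hi: "sqrt (2::real) < 1.45" by (rule real_less_lsqrt) (simp_all add: power2_eq_square)
  show "0 < y_crit" "y_crit < 9/20" using lo hi by (auto simp: y_crit_def)
  have "y_crit ^ 2 = 3 - 2 * sqrt 2" by (simp add: y_crit_def power2_diff)
  moreover have "1 - 2 * y_crit = 3 - 2 * sqrt 2" by (simp add: y_crit_def)
  moreover have "3 - 2 * sqrt (2::real) \<noteq> 0" using lo hi by auto
  ultimately show "y_crit ^ 2 / (1 - 2 * y_crit) = 1" by simp
qed

definition level_mass :: "mat set \<Rightarrow> nat \<Rightarrow> real" where
  "level_mass S j = real (card (level S mat_weight j)) * y_crit ^ j"

definition lists_mass :: "mat set \<Rightarrow> nat \<Rightarrow> real" where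
  "lists_mass S t = real (card (weighted_lists S mat_weight t)) * y_crit ^ t"

lemma level_mass_nonneg: "0 \<le> level_mass S j"
  using y_crit by (simp add: level_mass_def)

lemma lists_mass_nonneg: "0 \<le> lists_mass S t"
  using y_crit by (simp add: lists_mass_def)

context
  fixes k :: nat
  assumes k: "k \<ge> 1"
begin

lemma mat_weight_ge1: "M \<in> mats k \<Longrightarrow> mat_weight M \<ge> 1"
  using k by (simp add: mats_def mat_weight_size2)

lemma finite_level_mats: "S \<subseteq> mats k \<Longrightarrow> finite (level S mat_weight j)"
  by (rule finite_subset[OF _ finite_mat_level[of k j]]) (auto simp: level_def)

lemma finite_weighted_lists_mats:
  "S \<subseteq> mats k \<Longrightarrow> finite (weighted_lists S mat_weight t)"
  by (intro finite_weighted_lists finite_level_mats mat_weight_ge1) auto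

lemma level_mass_0: "S \<subseteq> mats k \<Longrightarrow> level_mass S 0 = 0"
proof -
  assume "S \<subseteq> mats k"
  then have "level S mat_weight 0 = {}" using mat_weight_ge1 by (fastforce simp: level_def)
  then show ?thesis by (simp add: level_mass_def)
qed

lemma lists_mass_0: "S \<subseteq> mats k \<Longrightarrow> lists_mass S 0 = 1"
  using mat_weight_ge1 by (subst lists_mass_def, subst weighted_lists_0) auto

lemma lists_mass_renewal:
  assumes S: "S \<subseteq> mats k" and t: "t \<ge> 1"
  shows "lists_mass S t = (\<Sum>i\<le>t. level_mass S i * lists_mass S (t - i))"
proof -
  have "card (weighted_lists S mat_weight t)
      = (\<Sum>i\<le>t. card (level S mat_weight i) * card (weighted_lists S mat_weight (t - i)))"
    using S mat_weight_ge1 by (intro card_weighted_lists finite_level_mats t) auto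
  then have "lists_mass S t
      = (\<Sum>i\<le>t. real (card (level S mat_weight i) * card (weighted_lists S mat_weight (t - i)))) * y_crit ^ t"
    by (simp add: lists_mass_def)
  also have "\<dots> = (\<Sum>i\<le>t. level_mass S i * lists_mass S (t - i))"
    unfolding sum_distrib_right
    by (rule sum.cong) (auto simp: level_mass_def lists_mass_def power_add[symmetric])
  finally show ?thesis .
qed

lemma level_mass_mono: "S \<subseteq> mats k \<Longrightarrow> level_mass S j \<le> level_mass (mats k) j"
  using y_crit finite_mat_level
  by (auto simp: level_mass_def level_def intro!: mult_right_mono card_mono)

lemma level_mass_sums: "level_mass (mats k) sums 1"
  using mat_gf[of y_crit k] y_crit unfolding level_mass_def[abs_def] by simp

lemma level_mass_partial_le_1:
  "S \<subseteq> mats k \<Longrightarrow> (\<Sum>i\<le>n. level_mass S i) \<le> 1"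
  using sums_partial_le[OF level_mass_sums level_mass_nonneg, of n]
    sum_mono[of "{..n}" "level_mass S" "level_mass (mats k)"] level_mass_mono by force

lemma level_mass_remove:
  assumes C: "C \<in> mats k"
  shows "level_mass (mats k - {C}) i = level_mass (mats k) i - (if i = mat_weight C then y_crit ^ i else 0)"
proof (cases "i = mat_weight C")
  case True
  then have "level (mats k - {C}) mat_weight i = level (mats k) mat_weight i - {C}"
    "C \<in> level (mats k) mat_weight i"
    using C by (auto simp: level_def)
  then have "card (level (mats k - {C}) mat_weight i) = card (level (mats k) mat_weight i) - 1"
    "card (level (mats k) mat_weight i) \<ge> 1"
    using finite_mat_level[of k i] by (simp_all add: Suc_le_eq card_gt_0_iff) blast
  then show ?thesis using True by (simp add: level_mass_def of_nat_diff algebra_simps)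
next
  case False
  then have "level (mats k - {C}) mat_weight i = level (mats k) mat_weight i" by (auto simp: level_def)
  then show ?thesis using False by (simp add: level_mass_def)
qed

lemma level_mass_remove_partial_le:
  assumes C: "C \<in> mats k"
  shows "(\<Sum>i\<le>n. level_mass (mats k - {C}) i) \<le> 1 - y_crit ^ mat_weight C"
proof -
  define N where "N = max n (mat_weight C)"
  have "(\<Sum>i\<le>n. level_mass (mats k - {C}) i) \<le> (\<Sum>i\<le>N. level_mass (mats k - {C}) i)"
    by (intro sum_mono2) (auto simp: N_def level_mass_nonneg)
  also have "\<dots> = (\<Sum>i\<le>N. level_mass (mats k) i) - y_crit ^ mat_weight C"
    by (simp add: level_mass_remove[OF C] sum_subtractf N_def)
  also have "\<dots> \<le> 1 - y_crit ^ mat_weight C"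
    using level_mass_partial_le_1[of "mats k" N] by simp
  finally show ?thesis .
qed

lemma lists_mass_le_1: "S \<subseteq> mats k \<Longrightarrow> lists_mass S t \<le> 1"
  using renewal_le_1[of "level_mass S" "lists_mass S"]
  by (simp add: level_mass_0 level_mass_nonneg lists_mass_0 lists_mass_renewal level_mass_partial_le_1)

lemma avoiding_lists_mass_tendsto_0:
  assumes C: "C \<in> mats k"
  shows "lists_mass (mats k - {C}) \<longlonglongrightarrow> 0"
proof (rule renewal_tendsto_0)
  show "\<And>n. (\<Sum>i\<le>n. level_mass (mats k - {C}) i) \<le> 1 - y_crit ^ mat_weight C"
    by (rule level_mass_remove_partial_le[OF C])
  show "1 - y_crit ^ mat_weight C < 1" using y_crit by simp
qed (simp_all add: level_mass_0 level_mass_nonneg lists_mass_0 lists_mass_renewal lists_mass_nonneg)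

text \<open>Comparing with the convergent series at 9/20 > y_crit gives geometric decay of the level masses,
  hence weights of finite mean.\<close>

lemma level_mass_tails_summable: "summable (\<lambda>n. 1 - (\<Sum>i\<le>n. level_mass (mats k) i))"
proof -
  define B where "B = ((9/20)^2 / (1 - 2 * (9/20 :: real))) ^ (k * k)"
  define \<theta> where "\<theta> = y_crit / (9/20)"
  have \<theta>: "0 \<le> \<theta>" "\<theta> < 1" using y_crit by (auto simp: \<theta>_def)
  have "level_mass (mats k) j \<le> B * \<theta> ^ j" for j
  proof -
    have "(\<lambda>j. real (card (level (mats k) mat_weight j)) * (9/20) ^ j) sums B"
      unfolding B_def by (rule mat_gf) auto
    then have "real (card (level (mats k) mat_weight j)) * (9/20) ^ j \<le> B"
      by (rule sums_term_le) simp
    then have "real (card (level (mats k) mat_weight j)) * (9/20) ^ j * \<theta> ^ j \<le> B * \<theta> ^ j"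
      using \<theta> by (intro mult_right_mono) auto
    moreover have "(9/20) ^ j * \<theta> ^ j = y_crit ^ j"
      by (simp add: \<theta>_def power_mult_distrib[symmetric])
    ultimately show ?thesis by (simp add: level_mass_def mult.assoc)
  qed
  then have tail: "norm (1 - (\<Sum>i\<le>n. level_mass (mats k) i)) \<le> B * \<theta> ^ Suc n / (1 - \<theta>)" for n
    using sums_tail_le[OF level_mass_sums _ \<theta>, of B n] level_mass_partial_le_1[of "mats k" n]
    by simp
  have "summable (\<lambda>n. B * \<theta> ^ Suc n / (1 - \<theta>))"
    using \<theta> by (intro summable_divide summable_mult) (simp add: summable_Suc_iff)
  then show ?thesis by (rule summable_comparison_test') (rule tail)
qed

lemma lists_mass_bounded_below: "\<exists>c>0. \<forall>t\<ge>2 * (k * k). c \<le> lists_mass (mats k) t"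
proof (rule renewal_bounded_below)
  show "summable (\<lambda>n. 1 - (\<Sum>i\<le>n. level_mass (mats k) i))" by (rule level_mass_tails_summable)
next
  fix t assume "2 * (k * k) \<le> t"
  then obtain M where "M \<in> mats k" "mat_weight M = t" using exists_mat_weight[OF k] by blast
  then have "[M] \<in> weighted_lists (mats k) mat_weight t" by (simp add: weighted_lists_def)
  then have "card (weighted_lists (mats k) mat_weight t) \<noteq> 0"
    using finite_weighted_lists_mats[of "mats k" t] by auto
  then show "0 < lists_mass (mats k) t" using y_crit by (simp add: lists_mass_def)
qed (simp_all add: level_mass_0 level_mass_nonneg level_mass_sums lists_mass_renewal lists_mass_nonneg)

lemma inst_weight:
  assumes "(Ws, C) \<in> Uall k"
  shows "sum_list (map mat_weight (Ws @ [C])) = Suc (size2_inst k (Ws, C))"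
proof -
  have v: "\<And>W. W \<in> set Ws \<Longrightarrow> valid_mat k W" "valid_mat k C"
    using assms by (auto simp: Uall_def)
  have "map mat_weight Ws = map (\<lambda>W. Suc (size2_mat k W)) Ws"
    by (rule map_cong) (simp_all add: mat_weight_size2[OF v(1) k])
  then have "sum_list (map mat_weight Ws) = sum_list (map (size2_mat k) Ws) + length Ws"
    by (simp only: sum_list_Suc)
  then show ?thesis by (simp add: size2_inst_def mat_weight_size2[OF v(2) k])
qed

lemma Um_bij_weighted_lists:
  "bij_betw (\<lambda>(Ws, C). Ws @ [C]) (Um k m) (weighted_lists (mats k) mat_weight (Suc m))"
proof (rule bij_betw_imageI)
  show "inj_on (\<lambda>(Ws, C). Ws @ [C]) (Um k m)" by (auto simp: inj_on_def)
  show "(\<lambda>(Ws, C). Ws @ [C]) ` Um k m = weighted_lists (mats k) mat_weight (Suc m)"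
  proof (intro equalityI subsetI)
    fix xs assume "xs \<in> (\<lambda>(Ws, C). Ws @ [C]) ` Um k m"
    then obtain Ws C where I: "(Ws, C) \<in> Uall k" "size2_inst k (Ws, C) = m" "xs = Ws @ [C]"
      by (auto simp: Um_def)
    then show "xs \<in> weighted_lists (mats k) mat_weight (Suc m)"
      using inst_weight[OF I(1)] by (auto simp: weighted_lists_def Uall_def mats_def)
  next
    fix xs assume xs: "xs \<in> weighted_lists (mats k) mat_weight (Suc m)"
    then have "xs \<noteq> []" by (auto simp: weighted_lists_def)
    then have split: "xs = butlast xs @ [last xs]" by simp
    have U: "(butlast xs, last xs) \<in> Uall k"
      using xs last_in_set[OF \<open>xs \<noteq> []\<close>]
      by (auto simp: weighted_lists_def Uall_def mats_def dest: in_set_butlastD)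
    then have "(butlast xs, last xs) \<in> Um k m"
      using inst_weight[OF U] xs split by (auto simp: Um_def weighted_lists_def)
    then show "xs \<in> (\<lambda>(Ws, C). Ws @ [C]) ` Um k m"
      using split by (auto intro!: image_eqI[of _ _ "(butlast xs, last xs)"])
  qed
qed

lemma card_Um: "card (Um k m) = card (weighted_lists (mats k) mat_weight (Suc m))"
  by (rule bij_betw_same_card[OF Um_bij_weighted_lists])

lemma finite_Um: "finite (Um k m)"
  using bij_betw_finite[OF Um_bij_weighted_lists] finite_weighted_lists_mats[of "mats k"] by auto

text \<open>An unlisted instance (Ws, C) is determined by C together with a list Ws avoiding C.\<close>

lemma card_unlisted_le:
  "card (Um k m - listed k)
    \<le> (\<Sum>C\<in>{C\<in>mats k. mat_weight C \<le> Suc m}.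
         card (weighted_lists (mats k - {C}) mat_weight (Suc m - mat_weight C)))"
proof -
  let ?F = "{C\<in>mats k. mat_weight C \<le> Suc m}"
  let ?L = "\<lambda>C. weighted_lists (mats k - {C}) mat_weight (Suc m - mat_weight C)"
  have fin: "finite ?F" by (rule finite_weight_le) (rule finite_mat_level)
  have "Um k m - listed k \<subseteq> (\<Union>C\<in>?F. (\<lambda>Ws. (Ws, C)) ` ?L C)"
  proof
    fix I assume I: "I \<in> Um k m - listed k"
    then obtain Ws C where IWC: "I = (Ws, C)" "(Ws, C) \<in> Uall k" "size2_inst k (Ws, C) = m"
        "C \<notin> set Ws"
      by (cases I) (auto simp: Um_def listed_def)
    then have "sum_list (map mat_weight Ws) + mat_weight C = Suc m"
      using inst_weight[of Ws C] by simp
    then show "I \<in> (\<Union>C\<in>?F. (\<lambda>Ws. (Ws, C)) ` ?L C)"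
      using IWC by (intro UN_I[of C]) (auto simp: weighted_lists_def Uall_def mats_def)
  qed
  then have "card (Um k m - listed k) \<le> card (\<Union>C\<in>?F. (\<lambda>Ws. (Ws, C)) ` ?L C)"
    using fin finite_weighted_lists_mats by (intro card_mono) auto
  also have "\<dots> \<le> (\<Sum>C\<in>?F. card ((\<lambda>Ws. (Ws, C)) ` ?L C))"
    by (rule card_UN_le[OF fin])
  also have "\<dots> \<le> (\<Sum>C\<in>?F. card (?L C))"
    by (intro sum_mono card_image_le) (use finite_weighted_lists_mats in auto)
  finally show ?thesis .
qed

definition unlisted_term :: "nat \<Rightarrow> nat \<Rightarrow> real" where
  "unlisted_term j m = (if j \<le> Suc m
     then (\<Sum>C\<in>level (mats k) mat_weight j. lists_mass (mats k - {C}) (Suc m - j)) * y_crit ^ j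
     else 0)"

lemma unlisted_mass_le:
  "real (card (Um k m - listed k)) * y_crit ^ Suc m \<le> (\<Sum>j. unlisted_term j m)"
proof -
  let ?F = "{C\<in>mats k. mat_weight C \<le> Suc m}"
  have "real (card (Um k m - listed k)) * y_crit ^ Suc m
      \<le> (\<Sum>C\<in>?F. real (card (weighted_lists (mats k - {C}) mat_weight (Suc m - mat_weight C))))
          * y_crit ^ Suc m"
    using card_unlisted_le[of m] y_crit by (intro mult_right_mono) (simp_all flip: of_nat_sum)
  also have "\<dots> = (\<Sum>C\<in>?F. lists_mass (mats k - {C}) (Suc m - mat_weight C) * y_crit ^ mat_weight C)"
    unfolding sum_distrib_right
    by (rule sum.cong) (auto simp: lists_mass_def mult.assoc power_add[symmetric])
  also have "?F = (\<Union>j\<le>Suc m. level (mats k) mat_weight j)" by (auto simp: level_def)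
  also have "(\<Sum>C\<in>(\<Union>j\<le>Suc m. level (mats k) mat_weight j).
        lists_mass (mats k - {C}) (Suc m - mat_weight C) * y_crit ^ mat_weight C)
      = (\<Sum>j\<le>Suc m. unlisted_term j m)"
    by (subst sum.UNION_disjoint)
      (auto simp: finite_mat_level[unfolded level_def] unlisted_term_def level_def sum_distrib_right
        intro!: sum.cong)
  also have "\<dots> = (\<Sum>j. unlisted_term j m)"
    by (rule suminf_finite[symmetric]) (auto simp: unlisted_term_def)
  finally show ?thesis .
qed

lemma unlisted_term_tendsto_0: "(\<lambda>m. unlisted_term j m) \<longlonglongrightarrow> 0"
proof -
  have "(\<lambda>m. (\<Sum>C\<in>level (mats k) mat_weight j. lists_mass (mats k - {C}) (Suc m - j)) * y_crit ^ j)
      \<longlonglongrightarrow> 0 * y_crit ^ j"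
  proof (intro tendsto_mult tendsto_const tendsto_null_sum)
    fix C assume "C \<in> level (mats k) mat_weight j"
    then have "lists_mass (mats k - {C}) \<longlonglongrightarrow> 0"
      by (intro avoiding_lists_mass_tendsto_0) (auto simp: level_def)
    then have "(\<lambda>n. lists_mass (mats k - {C}) (Suc (n + j) - j)) \<longlonglongrightarrow> 0"
      using LIMSEQ_Suc by simp
    then show "(\<lambda>m. lists_mass (mats k - {C}) (Suc m - j)) \<longlonglongrightarrow> 0"
      by (rule LIMSEQ_offset)
  qed
  moreover have "\<forall>\<^sub>F m in sequentially. unlisted_term j m
      = (\<Sum>C\<in>level (mats k) mat_weight j. lists_mass (mats k - {C}) (Suc m - j)) * y_crit ^ j"
    by (rule eventually_sequentiallyI[of j]) (simp add: unlisted_term_def)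
  ultimately show ?thesis by (simp add: tendsto_cong)
qed

lemma norm_unlisted_term_le: "norm (unlisted_term j m) \<le> level_mass (mats k) j"
proof -
  have "(\<Sum>C\<in>level (mats k) mat_weight j. lists_mass (mats k - {C}) (Suc m - j))
      \<le> real (card (level (mats k) mat_weight j))"
    using sum_bounded_above[of "level (mats k) mat_weight j"
        "\<lambda>C. lists_mass (mats k - {C}) (Suc m - j)" 1]
    by (simp add: lists_mass_le_1)
  then show ?thesis
    using y_crit lists_mass_nonneg
    by (auto simp: unlisted_term_def level_mass_def sum_nonneg intro!: mult_right_mono)
qed

lemma unlisted_mass_tendsto_0:
  "(\<lambda>m. real (card (Um k m - listed k)) * y_crit ^ Suc m) \<longlonglongrightarrow> 0"
proof (rule tendsto_sandwich[OF _ _ tendsto_const])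
  have "(\<lambda>m. \<Sum>j. unlisted_term j m) \<longlonglongrightarrow> (\<Sum>j. 0)"
    using tannerys_theorem[of "\<lambda>j m. unlisted_term j m" "\<lambda>_. 0" sequentially "level_mass (mats k)"]
      unlisted_term_tendsto_0 norm_unlisted_term_le sums_summable[OF level_mass_sums]
    by (auto intro: always_eventually)
  then show "(\<lambda>m. \<Sum>j. unlisted_term j m) \<longlonglongrightarrow> 0" by simp
  show "\<forall>\<^sub>F m in sequentially. 0 \<le> real (card (Um k m - listed k)) * y_crit ^ Suc m"
    using y_crit by simp
  show "\<forall>\<^sub>F m in sequentially.
      real (card (Um k m - listed k)) * y_crit ^ Suc m \<le> (\<Sum>j. unlisted_term j m)"
    by (intro always_eventually allI unlisted_mass_le)
qed

lemma unlisted_fraction_tendsto_0: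
  "(\<lambda>m. real (card (Um k m - listed k)) / real (card (Um k m))) \<longlonglongrightarrow> 0"
proof -
  obtain c where c: "c > 0" "\<And>t. t \<ge> 2 * (k * k) \<Longrightarrow> c \<le> lists_mass (mats k) t"
    using lists_mass_bounded_below by blast
  show ?thesis
  proof (rule tendsto_sandwich[OF _ _ tendsto_const])
    have "(\<lambda>m. real (card (Um k m - listed k)) * y_crit ^ Suc m / c) \<longlonglongrightarrow> 0 / c"
      by (intro tendsto_divide unlisted_mass_tendsto_0 tendsto_const) (use c in simp)
    then show "(\<lambda>m. real (card (Um k m - listed k)) * y_crit ^ Suc m / c) \<longlonglongrightarrow> 0"
      by simp
    show "\<forall>\<^sub>F m in sequentially. 0 \<le> real (card (Um k m - listed k)) / real (card (Um k m))"
      by simp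
    show "\<forall>\<^sub>F m in sequentially. real (card (Um k m - listed k)) / real (card (Um k m))
      \<le> real (card (Um k m - listed k)) * y_crit ^ Suc m / c"
    proof (rule eventually_sequentiallyI[of "2 * (k * k)"])
      fix m assume "2 * (k * k) \<le> m"
      then have c_le: "c \<le> real (card (Um k m)) * y_crit ^ Suc m"
        using c(2)[of "Suc m"] by (simp add: lists_mass_def card_Um)
      have "real (card (Um k m - listed k)) / real (card (Um k m))
          = real (card (Um k m - listed k)) * y_crit ^ Suc m / (real (card (Um k m)) * y_crit ^ Suc m)"
        using y_crit by simp
      also have "\<dots> \<le> real (card (Um k m - listed k)) * y_crit ^ Suc m / c"
        using c(1) c_le y_crit by (intro divide_left_mono) auto
      finally show "real (card (Um k m - listed k)) / real (card (Um k m))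
          \<le> real (card (Um k m - listed k)) * y_crit ^ Suc m / c" .
    qed
  qed
qed

lemma density_listed: "density_one k (listed k)"
proof -
  have "\<forall>\<^sub>F m in sequentially. 1 - real (card (Um k m - listed k)) / real (card (Um k m))
      = real (card (listed k \<inter> Um k m)) / real (card (Um k m))"
  proof (rule eventually_sequentiallyI[of "2 * (k * k)"])
    fix m assume "2 * (k * k) \<le> m"
    then obtain M where "M \<in> mats k" "mat_weight M = Suc m"
      using exists_mat_weight[OF k, of "Suc m"] by auto
    then have "[M] \<in> weighted_lists (mats k) mat_weight (Suc m)" by (simp add: weighted_lists_def)
    then have "card (Um k m) \<noteq> 0"
      using finite_weighted_lists_mats[of "mats k" "Suc m"] by (auto simp: card_Um)
    moreover have "card (listed k \<inter> Um k m) = card (Um k m) - card (Um k m - listed k)"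
      using finite_Um[of m] by (metis Diff_Diff_Int Diff_subset card_Diff_subset finite_Diff inf.commute)
    moreover have "card (Um k m - listed k) \<le> card (Um k m)"
      using finite_Um[of m] by (intro card_mono) auto
    ultimately show "1 - real (card (Um k m - listed k)) / real (card (Um k m))
        = real (card (listed k \<inter> Um k m)) / real (card (Um k m))"
      by (simp add: field_simps of_nat_diff)
  qed
  moreover have "(\<lambda>m. 1 - real (card (Um k m - listed k)) / real (card (Um k m))) \<longlonglongrightarrow> 1 - 0"
    by (intro tendsto_diff tendsto_const unlisted_fraction_tendsto_0)
  ultimately have "(\<lambda>m. real (card (listed k \<inter> Um k m)) / real (card (Um k m))) \<longlonglongrightarrow> 1"
    using Lim_transform_eventually by fastforce
  then show ?thesis unfolding density_one_def by (rule tendsto_mono[rotated]) simp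
qed

end

lemma factors_zero: "factors (replicate (length Ws) 0) Ws = []"
  by (induction Ws) (auto simp: factors_def)

lemma exists_01_factors_eq_single:
  assumes "C \<in> set Ws"
  shows "\<exists>xs. length xs = length Ws \<and> set xs \<subseteq> {0, 1} \<and> (\<exists>x\<in>set xs. x \<noteq> 0) \<and> factors xs Ws = [C]"
  using assms
proof (induction Ws)
  case Nil then show ?case by simp
next
  case (Cons W Ws)
  show ?case
  proof (cases "W = C")
    case True
    let ?xs = "1 # replicate (length Ws) 0"
    have "factors ?xs (W # Ws) = [C]" using True factors_zero[of Ws] by (simp add: factors_def)
    then show ?thesis by (intro exI[of _ ?xs]) auto
  next
    case False
    then obtain xs where xs: "length xs = length Ws" "set xs \<subseteq> {0, 1}" "\<exists>x\<in>set xs. x \<noteq> 0" "factors xs Ws = [C]"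
      using Cons by auto
    have "factors (0 # xs) (W # Ws) = [C]" using xs(4) by (simp add: factors_def)
    then show ?thesis using xs by (intro exI[of _ "0 # xs"]) auto
  qed
qed

lemma mat_prod_single: "mat_prod k [C] = C"
  by (simp add: mat_prod_def)

lemma SSP_if_listed: "I \<in> listed k \<Longrightarrow> SSP k I"
  using exists_01_factors_eq_single[of "snd I" "fst I"]
  by (cases I) (auto simp: listed_def SSP_def mat_prod_single)

lemma KP_if_listed: "I \<in> listed k \<Longrightarrow> KP k I"
  using exists_01_factors_eq_single[of "snd I" "fst I"]
  by (cases I) (auto simp: listed_def KP_def mat_prod_single)

lemma generically_poly_if_listed:
  assumes k: "k \<ge> 1" and P: "\<And>I. I \<in> listed k \<Longrightarrow> P I"
  shows "generically_poly k P"
  unfolding generically_poly_def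
proof (intro exI conjI ballI)
  show "tm_wf 29 11 member_tm" by (rule member_tm_wf)
next
  fix I assume "I \<in> Uall k"
  then show "let r = tm_state_after member_tm (5 * (size2_inst k I + 1) ^ 2) (encode_inst I)
      in r \<in> {1, 2, 3} \<and> (r = 1 \<longrightarrow> P I) \<and> (r = 2 \<longrightarrow> \<not> P I)"
    using member_tm_on_instance[OF k] P by (simp add: Let_def)
next
  have "{I \<in> Uall k. tm_state_after member_tm (5 * (size2_inst k I + 1) ^ 2) (encode_inst I) \<noteq> 3}
      = listed k"
    using member_tm_on_instance[OF k] by (auto simp: listed_def split: if_splits)
  then show "density_one k
      {I \<in> Uall k. tm_state_after member_tm (5 * (size2_inst k I + 1) ^ 2) (encode_inst I) \<noteq> 3}"
    using density_listed[OF k] by simp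
qed

theorem mainTheorem17:
  fixes k :: nat
  assumes "k \<ge> 1"
  shows "generically_poly k (SSP k) \<and> generically_poly k (KP k)"
  using generically_poly_if_listed[OF assms] SSP_if_listed KP_if_listed by blast

end
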